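(* Let $H$ be a Krull monoid with class group $G$, and let $\emptyset\ne S\subseteq\mathfrak X(H)$ be finite. The following are equivalent: (a) there exists an absolutely irreducible $a\in H$ with $\mathrm{supp}(aH)=S$; (b) $S$ is minimal (w.r.t. inclusion) in $\{\mathrm{supp}(bH): b\in H\setminus H^\times\}$; (c) $S$ is minimal in $\{\mathrm{supp}(bH): b\in H \text{ irreducible}\}$; (d) the family $([\mathfrak p])_{\mathfrak p\in S}$ in $G$ is $\mathbb Z_{\ge0}$-linearly dependent, and every proper subfamily is $\mathbb Z_{\ge0}$-linearly independent; (e) the family $([\mathfrak p])_{\mathfrak p\in S}$ in $G$ is $\mathbb Z_{\ge0}$-linearly dependent, and every proper subfamily is $\mathbb Z$-linearly independent. Moreover, if these conditions hold, the absolutely irreducible element with support $S$ is unique up to associates.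
   Context: $H$ is a cancellative commutative monoid with unit group $H^\times$; it is a Krull monoid if it is $v$-noetherian and completely integrally closed. $\mathfrak X(H)$ denotes the set of nonempty divisorial prime ideals of $H$; every nonempty divisorial ideal $\mathfrak a$ is uniquely a divisorial product $\big(\prod_{\mathfrak p\in\mathfrak X(H)}\mathfrak p^{\mathsf v_\mathfrak p(\mathfrak a)}\big)_v$, and its support is $\mathrm{supp}(\mathfrak a)=\{\mathfrak p\in\mathfrak X(H):\mathsf v_\mathfrak p(\mathfrak a)>0\}$. The class group $G$ is the group of divisorial fractional ideals modulo principal ones, $[\mathfrak a]$ denotes the class of $\mathfrak a$, and $G$ is written additively. A family $(g_\mathfrak p)_{\mathfrak p\in S}$ is $\mathbb Z_{\ge0}$-linearly dependent if $\sum\alpha_\mathfrak p g_\mathfrak p=0$ for some nonzero $(\alpha_\mathfrak p)\in\mathbb Z_{\ge0}^S$ (the empty family counts as independent). Irreducible: non-unit not a product of two non-units. An irreducible $r$ is absolutely irreducible if for every $n$, every factorization of $r^n$ into irreducibles coincides, up to order and associates, with $r\cdots r$. *)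

theory Defs
  imports "HOL-Algebra.FiniteProduct"
begin

text \<open>
Convention: a cancellative commutative monoid H is represented (up to isomorphism)
as a submonoid of an abelian group written additively (the type 'a, which plays the
role of any group containing the quotient group of H). The monoid operation of H
is therefore written +, the identity is 0, and the quotient group is q(H) = H - H.
\<close>

definition submonoid_add :: "'a::ab_group_add set \<Rightarrow> bool" where
  "submonoid_add H \<longleftrightarrow> 0 \<in> H \<and> (\<forall>a\<in>H. \<forall>b\<in>H. a + b \<in> H)"

definition qgrp :: "'a::ab_group_add set \<Rightarrow> 'a set" where
  "qgrp H = {a - b | a b. a \<in> H \<and> b \<in> H}"

definition unitsH :: "'a::ab_group_add set \<Rightarrow> 'a set" where
  "unitsH H = {a \<in> H. - a \<in> H}"

definition nmul :: "nat \<Rightarrow> 'a::ab_group_add \<Rightarrow> 'a" where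
  "nmul n x = sum_list (replicate n x)"

definition vinv :: "'a::ab_group_add set \<Rightarrow> 'a set \<Rightarrow> 'a set" where
  "vinv H X = {x \<in> qgrp H. \<forall>y\<in>X. x + y \<in> H}"

definition vclos :: "'a::ab_group_add set \<Rightarrow> 'a set \<Rightarrow> 'a set" where
  "vclos H X = vinv H (vinv H X)"

definition div_ideal :: "'a::ab_group_add set \<Rightarrow> 'a set \<Rightarrow> bool" where
  "div_ideal H A \<longleftrightarrow> A \<subseteq> H \<and> vclos H A = A"

definition v_noetherian :: "'a::ab_group_add set \<Rightarrow> bool" where
  "v_noetherian H \<longleftrightarrow>
     (\<forall>f::nat \<Rightarrow> 'a set. (\<forall>i. div_ideal H (f i)) \<and> (\<forall>i. f i \<subseteq> f (Suc i))
        \<longrightarrow> (\<exists>N. \<forall>i\<ge>N. f i = f N))"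

definition completely_int_closed :: "'a::ab_group_add set \<Rightarrow> bool" where
  "completely_int_closed H \<longleftrightarrow>
     (\<forall>x\<in>qgrp H. (\<exists>c\<in>H. \<forall>n. c + nmul n x \<in> H) \<longrightarrow> x \<in> H)"

definition krull_monoid :: "'a::ab_group_add set \<Rightarrow> bool" where
  "krull_monoid H \<longleftrightarrow> submonoid_add H \<and> v_noetherian H \<and> completely_int_closed H"

definition prime_ideal :: "'a::ab_group_add set \<Rightarrow> 'a set \<Rightarrow> bool" where
  "prime_ideal H P \<longleftrightarrow> P \<subseteq> H \<and> P \<noteq> H \<and> (\<forall>a\<in>P. \<forall>h\<in>H. a + h \<in> P)
     \<and> (\<forall>a\<in>H. \<forall>b\<in>H. a + b \<in> P \<longrightarrow> a \<in> P \<or> b \<in> P)"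

definition XH :: "'a::ab_group_add set \<Rightarrow> 'a set set" where
  "XH H = {P. P \<noteq> {} \<and> prime_ideal H P \<and> div_ideal H P}"

(* the (non-closed) product \<prod>_{p} p^{e p} of ideals, in additive notation *)
definition idprod :: "('a::ab_group_add set \<Rightarrow> nat) \<Rightarrow> 'a set" where
  "idprod e = {(\<Sum>P\<in>{Q. 0 < e Q}. \<Sum>i<e P. x P i) | x.
               \<forall>P\<in>{Q. 0 < e Q}. \<forall>i<e P. x P i \<in> P}"

definition vprod :: "'a::ab_group_add set \<Rightarrow> ('a set \<Rightarrow> nat) \<Rightarrow> 'a set" where
  "vprod H e = vclos H (idprod e)"

definition vval :: "'a::ab_group_add set \<Rightarrow> 'a set \<Rightarrow> 'a set \<Rightarrow> nat" where
  "vval H A P = (THE e. finite {Q. 0 < e Q} \<and> {Q. 0 < e Q} \<subseteq> XH H \<and> A = vprod H e) P"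

definition supp :: "'a::ab_group_add set \<Rightarrow> 'a set \<Rightarrow> 'a set set" where
  "supp H A = {P \<in> XH H. 0 < vval H A P}"

definition pideal :: "'a::ab_group_add set \<Rightarrow> 'a \<Rightarrow> 'a set" where
  "pideal H a = (\<lambda>h. a + h) ` H"

definition irred :: "'a::ab_group_add set \<Rightarrow> 'a \<Rightarrow> bool" where
  "irred H a \<longleftrightarrow> a \<in> H \<and> a \<notin> unitsH H \<and>
     (\<forall>b\<in>H. \<forall>c\<in>H. a = b + c \<longrightarrow> b \<in> unitsH H \<or> c \<in> unitsH H)"

definition associated :: "'a::ab_group_add set \<Rightarrow> 'a \<Rightarrow> 'a \<Rightarrow> bool" where
  "associated H a b \<longleftrightarrow> (\<exists>u\<in>unitsH H. b = a + u)"

definition abs_irred :: "'a::ab_group_add set \<Rightarrow> 'a \<Rightarrow> bool" where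
  "abs_irred H r \<longleftrightarrow> irred H r \<and>
     (\<forall>n xs. (\<forall>x\<in>set xs. irred H x) \<and> sum_list xs = nmul n r
        \<longrightarrow> length xs = n \<and> (\<forall>x\<in>set xs. associated H x r))"

definition frac_div :: "'a::ab_group_add set \<Rightarrow> 'a set \<Rightarrow> bool" where
  "frac_div H X \<longleftrightarrow> X \<noteq> {} \<and> X \<subseteq> qgrp H \<and> (\<exists>c\<in>H. (\<lambda>x. c + x) ` X \<subseteq> H)
     \<and> vclos H X = X"

definition cls :: "'a::ab_group_add set \<Rightarrow> 'a set \<Rightarrow> 'a set set" where
  "cls H A = {B. frac_div H B \<and> (\<exists>x\<in>qgrp H. B = (\<lambda>y. x + y) ` A)}"

definition setsum :: "'a::ab_group_add set \<Rightarrow> 'a set \<Rightarrow> 'a set" where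
  "setsum A B = {a + b | a b. a \<in> A \<and> b \<in> B}"

definition class_group :: "'a::ab_group_add set \<Rightarrow> 'a set set monoid" where
  "class_group H = \<lparr> carrier = cls H ` {X. frac_div H X},
     monoid.mult = (\<lambda>C D. cls H (vclos H (setsum (SOME A. A \<in> C) (SOME B. B \<in> D)))),
     one = cls H H \<rparr>"

end

theory Submission
  imports Defs
begin

text \<open>
Every divisorial ideal of a Krull monoid, in particular every principal ideal \<open>aH\<close>, is a
v-product of divisorial primes in exactly one way: v-noetherianity gives existence, and
complete integral closure makes divisorial ideals invertible, which gives uniqueness.
So \<open>a\<close> is determined up to units by its divisor \<open>\<frak>p \<mapsto> v\<^sub>\<frak>p(aH)\<close>, divisibility is the
componentwise order of divisors, and a divisor is the divisor of an element iff its class in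
\<open>G\<close> is trivial; such divisors are the relations among the classes \<open>[\<frak>p]\<close>.
Minimality of \<open>S\<close> in the sense of (b) or (c) then says that the classes \<open>[\<frak>p]\<close>, \<open>\<frak>p \<in> S\<close>,
satisfy a relation but no proper subfamily does, and an exchange argument upgrades
independence over \<open>\<nat>\<close> to independence over \<open>\<int>\<close>. Under (e) any two relations supported in
\<open>S\<close> are proportional, so all of them are multiples of the one relation \<open>\<gamma>\<close> with least
coordinate at a fixed prime; an element with divisor \<open>\<gamma>\<close> is absolutely irreducible, and
every irreducible element with support in \<open>S\<close> has divisor \<open>\<gamma>\<close>.
\<close>

section \<open>The v-operation\<close>

definition translate :: "'a::ab_group_add \<Rightarrow> 'a set \<Rightarrow> 'a set" where
  "translate x X = (\<lambda>y. x + y) ` X"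

lemma translate_translate: "translate x (translate y A) = translate (x + y) A"
  unfolding translate_def by (auto simp: image_image add.assoc)

lemma translate_zero [simp]: "translate 0 A = A"
  unfolding translate_def by auto

lemma mem_translate_self: "0 \<in> A \<Longrightarrow> x \<in> translate x A"
  unfolding translate_def by (auto intro: image_eqI[of _ _ 0])

lemma setsum_commute: "setsum A B = setsum B A"
  unfolding setsum_def by (auto simp: add.commute) (metis add.commute)+

lemma setsum_assoc: "setsum (setsum A B) C = setsum A (setsum B C)"
proof (intro equalityI subsetI)
  fix z assume "z \<in> setsum (setsum A B) C"
  then obtain a b c where "a \<in> A" "b \<in> B" "c \<in> C" "z = a + (b + c)"
    unfolding setsum_def by (auto simp: add.assoc)
  then show "z \<in> setsum A (setsum B C)" unfolding setsum_def by blast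
next
  fix z assume "z \<in> setsum A (setsum B C)"
  then obtain a b c where "a \<in> A" "b \<in> B" "c \<in> C" "z = (a + b) + c"
    unfolding setsum_def by (auto simp: add.assoc)
  then show "z \<in> setsum (setsum A B) C" unfolding setsum_def by blast
qed

lemma setsum_mono: "A \<subseteq> A' \<Longrightarrow> B \<subseteq> B' \<Longrightarrow> setsum A B \<subseteq> setsum A' B'"
  unfolding setsum_def by auto

lemma setsum_zero_left [simp]: "setsum {0} A = A"
  unfolding setsum_def by auto

lemma setsum_translate: "setsum (translate x A) B = translate x (setsum A B)"
proof (intro equalityI subsetI)
  fix z assume "z \<in> setsum (translate x A) B"
  then obtain a b where "a \<in> A" "b \<in> B" "z = x + (a + b)"
    unfolding setsum_def translate_def by (auto simp: add.assoc)
  then show "z \<in> translate x (setsum A B)" unfolding setsum_def translate_def by blast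
next
  fix z assume "z \<in> translate x (setsum A B)"
  then obtain a b where "a \<in> A" "b \<in> B" "z = (x + a) + b"
    unfolding setsum_def translate_def by (auto simp: add.assoc)
  then show "z \<in> setsum (translate x A) B" unfolding setsum_def translate_def by blast
qed

locale add_submonoid =
  fixes H :: "'a::ab_group_add set"
  assumes submonoid: "submonoid_add H"
begin

lemma zero_mem: "0 \<in> H"
  using submonoid unfolding submonoid_add_def by auto

lemma add_mem: "a \<in> H \<Longrightarrow> b \<in> H \<Longrightarrow> a + b \<in> H"
  using submonoid unfolding submonoid_add_def by auto

lemma H_subset_qgrp: "H \<subseteq> qgrp H"
  unfolding qgrp_def using zero_mem by force

lemma qgrp_add:
  assumes "x \<in> qgrp H" "y \<in> qgrp H" shows "x + y \<in> qgrp H"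
proof -
  obtain a b c d where "x = a - b" "y = c - d" "a \<in> H" "b \<in> H" "c \<in> H" "d \<in> H"
    using assms unfolding qgrp_def by auto
  then have "x + y = (a + c) - (b + d)" "a + c \<in> H" "b + d \<in> H"
    by (auto simp: add_mem algebra_simps)
  then show ?thesis unfolding qgrp_def by blast
qed

lemma qgrp_uminus: "x \<in> qgrp H \<Longrightarrow> - x \<in> qgrp H"
  unfolding qgrp_def by force

lemma qgrp_zero: "0 \<in> qgrp H"
  using H_subset_qgrp zero_mem by auto

lemma qgrp_diff: "x \<in> qgrp H \<Longrightarrow> y \<in> qgrp H \<Longrightarrow> x - y \<in> qgrp H"
  using qgrp_add qgrp_uminus by (metis diff_conv_add_uminus)

lemma translate_subset_qgrp: "x \<in> qgrp H \<Longrightarrow> X \<subseteq> qgrp H \<Longrightarrow> translate x X \<subseteq> qgrp H"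
  unfolding translate_def using qgrp_add by auto

lemma setsum_subset_qgrp: "A \<subseteq> qgrp H \<Longrightarrow> B \<subseteq> qgrp H \<Longrightarrow> setsum A B \<subseteq> qgrp H"
  unfolding setsum_def using qgrp_add by auto

lemma vinv_subset_qgrp: "vinv H X \<subseteq> qgrp H"
  unfolding vinv_def by auto

lemma vclos_subset_qgrp: "vclos H X \<subseteq> qgrp H"
  unfolding vclos_def by (rule vinv_subset_qgrp)

lemma vinv_antimono: "X \<subseteq> Y \<Longrightarrow> vinv H Y \<subseteq> vinv H X"
  unfolding vinv_def by auto

lemma vclos_mono: "X \<subseteq> Y \<Longrightarrow> vclos H X \<subseteq> vclos H Y"
  unfolding vclos_def by (intro vinv_antimono)

lemma vclos_ext: "X \<subseteq> qgrp H \<Longrightarrow> X \<subseteq> vclos H X"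
  unfolding vclos_def vinv_def by (auto simp: add.commute)

lemma vinv_vclos: "X \<subseteq> qgrp H \<Longrightarrow> vinv H (vclos H X) = vinv H X"
  using vinv_antimono[OF vclos_ext] vclos_ext[OF vinv_subset_qgrp, of X]
  unfolding vclos_def by blast

lemma vclos_idem: "X \<subseteq> qgrp H \<Longrightarrow> vclos H (vclos H X) = vclos H X"
  by (metis vclos_def vinv_vclos)

lemma vinv_translate: "x \<in> qgrp H \<Longrightarrow> vinv H (translate x X) = translate (- x) (vinv H X)"
proof (rule Set.set_eqI)
  fix z assume x: "x \<in> qgrp H"
  have "z \<in> vinv H (translate x X) \<longleftrightarrow> z + x \<in> vinv H X"
    unfolding vinv_def translate_def
    using qgrp_add[OF _ x] qgrp_add[OF _ qgrp_uminus[OF x], of "z + x"] qgrp_add[OF x]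
    by (auto simp: add_ac) (metis add.commute)
  also have "\<dots> \<longleftrightarrow> z \<in> translate (- x) (vinv H X)"
    unfolding translate_def by (auto intro: image_eqI[where x = "z + x"])
  finally show "z \<in> vinv H (translate x X) \<longleftrightarrow> z \<in> translate (- x) (vinv H X)" .
qed

lemma vclos_translate: "x \<in> qgrp H \<Longrightarrow> vclos H (translate x X) = translate x (vclos H X)"
  unfolding vclos_def by (simp add: vinv_translate qgrp_uminus)

lemma H_subset_vinv: "X \<subseteq> H \<Longrightarrow> H \<subseteq> vinv H X"
  unfolding vinv_def using H_subset_qgrp add_mem by auto

lemma vinv_H: "vinv H H = H"
proof
  show "H \<subseteq> vinv H H" by (rule H_subset_vinv) simp
  show "vinv H H \<subseteq> H" unfolding vinv_def using zero_mem by force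
qed

lemma vclos_H: "vclos H H = H"
  unfolding vclos_def by (simp add: vinv_H)

lemma vclos_zero: "vclos H {0} = H"
proof -
  have "vinv H {0} = H" unfolding vinv_def using H_subset_qgrp by auto
  then show ?thesis unfolding vclos_def by (simp add: vinv_H)
qed

lemma vclos_subset_H: "X \<subseteq> H \<Longrightarrow> vclos H X \<subseteq> H"
  unfolding vclos_def using vinv_antimono[OF H_subset_vinv] vinv_H by auto

lemma vinv_setsum_vclos:
  assumes "X \<subseteq> qgrp H" "Y \<subseteq> qgrp H"
  shows "vinv H (setsum (vclos H X) Y) = vinv H (setsum X Y)"
proof
  show "vinv H (setsum (vclos H X) Y) \<subseteq> vinv H (setsum X Y)"
    by (intro vinv_antimono setsum_mono vclos_ext[OF assms(1)] order_refl)
  show "vinv H (setsum X Y) \<subseteq> vinv H (setsum (vclos H X) Y)"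
  proof
    fix z assume z: "z \<in> vinv H (setsum X Y)"
    then have zQ: "z \<in> qgrp H" unfolding vinv_def by auto
    have "z + w \<in> H" if "w \<in> setsum (vclos H X) Y" for w
    proof -
      from that obtain x y where w: "w = x + y" "x \<in> vclos H X" "y \<in> Y"
        unfolding setsum_def by auto
      have "z + y \<in> vinv H X"
        using z w(3) qgrp_add[OF zQ] assms(2)
        by (auto simp: vinv_def setsum_def add_ac) (metis add.assoc add.commute)
      then have "x + (z + y) \<in> H" using w(2) unfolding vclos_def vinv_def by auto
      then show ?thesis using w by (simp add: add_ac)
    qed
    then show "z \<in> vinv H (setsum (vclos H X) Y)" unfolding vinv_def using zQ by auto
  qed
qed

lemma vclos_setsum_vclos_left:
  "X \<subseteq> qgrp H \<Longrightarrow> Y \<subseteq> qgrp H \<Longrightarrow> vclos H (setsum (vclos H X) Y) = vclos H (setsum X Y)"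
  unfolding vclos_def[of H "setsum _ _"] by (simp add: vinv_setsum_vclos)

lemma vclos_setsum_vclos_right:
  "X \<subseteq> qgrp H \<Longrightarrow> Y \<subseteq> qgrp H \<Longrightarrow> vclos H (setsum X (vclos H Y)) = vclos H (setsum X Y)"
  using vclos_setsum_vclos_left setsum_commute by metis

end

locale krull = add_submonoid +
  assumes noetherian: "v_noetherian H" and int_closed: "completely_int_closed H"

section \<open>The group of divisorial fractional ideals\<close>

context add_submonoid
begin

definition vmul :: "'a set \<Rightarrow> 'a set \<Rightarrow> 'a set" where
  "vmul A B = vclos H (setsum A B)"

lemma frac_div_subset_qgrp: "frac_div H A \<Longrightarrow> A \<subseteq> qgrp H"
  unfolding frac_div_def by auto

lemma frac_div_vclos: "frac_div H A \<Longrightarrow> vclos H A = A"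
  unfolding frac_div_def by auto

lemma frac_div_H: "frac_div H H"
  unfolding frac_div_def using zero_mem H_subset_qgrp vclos_H by (auto intro!: bexI[of _ 0])

lemma setsum_subset_vmul: "A \<subseteq> qgrp H \<Longrightarrow> B \<subseteq> qgrp H \<Longrightarrow> setsum A B \<subseteq> vmul A B"
  unfolding vmul_def using vclos_ext setsum_subset_qgrp by auto

lemma vmul_commute: "vmul A B = vmul B A"
  unfolding vmul_def by (metis setsum_commute)

lemma vmul_mono: "A \<subseteq> B \<Longrightarrow> vmul A C \<subseteq> vmul B C"
  unfolding vmul_def by (intro vclos_mono setsum_mono) auto

lemma vmul_translate: "x \<in> qgrp H \<Longrightarrow> vmul (translate x A) B = translate x (vmul A B)"
  unfolding vmul_def setsum_translate by (rule vclos_translate)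

lemma subset_translate_uminus: "translate c A \<subseteq> H \<Longrightarrow> A \<subseteq> translate (- c) H"
proof
  fix a assume "translate c A \<subseteq> H" "a \<in> A"
  then have "c + a \<in> H" unfolding translate_def by auto
  moreover have "a = - c + (c + a)" by simp
  ultimately show "a \<in> translate (- c) H" unfolding translate_def by blast
qed

lemma frac_div_vmul:
  assumes A: "frac_div H A" and B: "frac_div H B"
  shows "frac_div H (vmul A B)"
proof -
  have sub: "setsum A B \<subseteq> qgrp H"
    using setsum_subset_qgrp frac_div_subset_qgrp A B by blast
  have ne: "setsum A B \<noteq> {}" using A B unfolding frac_div_def setsum_def by auto
  obtain c1 where c1: "c1 \<in> H" "translate c1 A \<subseteq> H"
    using A unfolding frac_div_def translate_def by auto
  obtain c2 where c2: "c2 \<in> H" "translate c2 B \<subseteq> H"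
    using B unfolding frac_div_def translate_def by auto
  define c where "c = c1 + c2"
  have cH: "c \<in> H" unfolding c_def using add_mem c1 c2 by blast
  have cQ: "- c \<in> qgrp H" using qgrp_uminus H_subset_qgrp cH by blast
  have "translate c (setsum A B) \<subseteq> H"
  proof
    fix z assume "z \<in> translate c (setsum A B)"
    then obtain a b where ab: "a \<in> A" "b \<in> B" "z = (c1 + a) + (c2 + b)"
      unfolding translate_def setsum_def c_def by (auto simp: algebra_simps)
    then have "c1 + a \<in> H" "c2 + b \<in> H" using c1 c2 unfolding translate_def by auto
    then show "z \<in> H" using ab add_mem by simp
  qed
  then have "vclos H (setsum A B) \<subseteq> translate (- c) H"
    using vclos_mono[OF subset_translate_uminus] vclos_translate[OF cQ] vclos_H by metis
  then have "translate c (vclos H (setsum A B)) \<subseteq> H"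
    unfolding translate_def by auto
  then show ?thesis unfolding frac_div_def vmul_def translate_def
    using cH ne vclos_ext[OF sub] vclos_subset_qgrp vclos_idem[OF sub] by auto
qed

lemma vmul_assoc:
  assumes "frac_div H A" "frac_div H B" "frac_div H C"
  shows "vmul (vmul A B) C = vmul A (vmul B C)"
proof -
  have Q: "A \<subseteq> qgrp H" "B \<subseteq> qgrp H" "C \<subseteq> qgrp H"
    using assms frac_div_subset_qgrp by auto
  have "vmul (vmul A B) C = vclos H (setsum (setsum A B) C)"
    unfolding vmul_def by (rule vclos_setsum_vclos_left) (use Q setsum_subset_qgrp in auto)
  also have "\<dots> = vclos H (setsum A (setsum B C))" by (simp add: setsum_assoc)
  also have "\<dots> = vmul A (vmul B C)"
    unfolding vmul_def by (rule vclos_setsum_vclos_right[symmetric]) (use Q setsum_subset_qgrp in auto)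
  finally show ?thesis .
qed

lemma vmul_H_left: "frac_div H A \<Longrightarrow> vmul H A = A"
  unfolding vmul_def
  by (metis vclos_zero vclos_setsum_vclos_left setsum_zero_left frac_div_vclos
      frac_div_subset_qgrp qgrp_zero empty_subsetI insert_subset)

lemma vmul_H_right: "frac_div H A \<Longrightarrow> vmul A H = A"
  using vmul_H_left vmul_commute by metis

lemma vmul_subset_right: "frac_div H B \<Longrightarrow> A \<subseteq> H \<Longrightarrow> vmul A B \<subseteq> B"
  using vmul_mono[of A H B] vmul_H_left by auto

lemma frac_div_translate:
  assumes A: "frac_div H A" and x: "x \<in> qgrp H"
  shows "frac_div H (translate x A)"
proof -
  obtain h1 h2 where h: "x = h1 - h2" "h1 \<in> H" "h2 \<in> H" using x unfolding qgrp_def by auto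
  have "translate h2 (translate x H) \<subseteq> H"
    using h add_mem by (auto simp: translate_def algebra_simps)
  then have "frac_div H (translate x H)" unfolding frac_div_def
    using translate_subset_qgrp[OF x H_subset_qgrp] vclos_translate[OF x, of H] vclos_H h zero_mem
    by (auto simp: translate_def)
  moreover have "translate x A = vmul (translate x H) A"
    using vmul_translate[OF x, of H A] vmul_H_left[OF A] by simp
  ultimately show ?thesis using frac_div_vmul A by simp
qed

lemma frac_div_vinv:
  assumes A: "frac_div H A"
  shows "frac_div H (vinv H A)"
proof -
  obtain c where c: "c \<in> H" "(\<lambda>x. c + x) ` A \<subseteq> H" using A unfolding frac_div_def by auto
  then have c_inv: "c \<in> vinv H A" unfolding vinv_def using H_subset_qgrp by auto
  obtain a where a: "a \<in> A" using A unfolding frac_div_def by auto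
  then obtain h1 h2 where h: "a = h1 - h2" "h1 \<in> H" "h2 \<in> H"
    using frac_div_subset_qgrp[OF A] unfolding qgrp_def by auto
  have "(\<lambda>x. h1 + x) ` vinv H A \<subseteq> H"
  proof
    fix z assume "z \<in> (\<lambda>x. h1 + x) ` vinv H A"
    then obtain y where y: "z = h1 + y" "y \<in> vinv H A" by auto
    then have "a + y \<in> H" using a unfolding vinv_def by (auto simp: add.commute)
    then have "(a + y) + h2 \<in> H" using add_mem h(3) by blast
    then show "z \<in> H" using y h by (simp add: algebra_simps)
  qed
  moreover have "vclos H (vinv H A) = vinv H A"
    using vinv_vclos[OF frac_div_subset_qgrp[OF A]] by (simp add: vclos_def)
  ultimately show ?thesis unfolding frac_div_def using c_inv h vinv_subset_qgrp by auto
qed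

end

context krull
begin

text \<open>Complete integral closure is used here: every
  \<open>x \<in> (A(H:A))\<^sup>-\<^sup>1\<close> stabilises the fractional ideal \<open>(H:A)\<close>, so all its powers lie in a
  common translate of \<open>H\<close>.\<close>

lemma vmul_vinv: assumes A: "frac_div H A" shows "vmul A (vinv H A) = H"
proof -
  have "vinv H (setsum A (vinv H A)) = H"
  proof
    have "setsum A (vinv H A) \<subseteq> H"
      unfolding setsum_def vinv_def by (auto simp: add.commute)
    then show "H \<subseteq> vinv H (setsum A (vinv H A))" by (rule H_subset_vinv)
    show "vinv H (setsum A (vinv H A)) \<subseteq> H"
    proof
      fix x assume x: "x \<in> vinv H (setsum A (vinv H A))"
      then have xQ: "x \<in> qgrp H" unfolding vinv_def by auto
      have stable: "x + b \<in> vinv H A" if "b \<in> vinv H A" for b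
      proof -
        have "x + b + a \<in> H" if "a \<in> A" for a
          using x \<open>b \<in> vinv H A\<close> that unfolding vinv_def setsum_def
          by (auto simp: add_ac) (metis add.assoc add.commute)
        then show ?thesis
          unfolding vinv_def using qgrp_add[OF xQ] that vinv_subset_qgrp by auto
      qed
      have powers: "nmul n x + b \<in> vinv H A" if "b \<in> vinv H A" for n b
        using that by (induction n arbitrary: b) (auto simp: nmul_def add.assoc stable)
      obtain b where b: "b \<in> vinv H A" using frac_div_vinv[OF A] unfolding frac_div_def by auto
      obtain a where a: "a \<in> A" using A unfolding frac_div_def by auto
      have "a + b \<in> H" using a b unfolding vinv_def by (auto simp: add.commute)
      moreover have "a + b + nmul n x \<in> H" for n
        using powers[OF b, of n] a unfolding vinv_def by (auto simp: add_ac)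
      ultimately show "x \<in> H"
        using int_closed xQ unfolding completely_int_closed_def by blast
    qed
  qed
  then show ?thesis unfolding vmul_def vclos_def by (simp add: vinv_H)
qed

lemma vmul_cancel_subset:
  assumes "frac_div H A" "frac_div H B" "frac_div H C" "vmul A C \<subseteq> vmul B C"
  shows "A \<subseteq> B"
proof -
  have "vmul (vmul A C) (vinv H C) \<subseteq> vmul (vmul B C) (vinv H C)"
    using assms(4) by (rule vmul_mono)
  then show ?thesis
    using assms vmul_assoc frac_div_vinv vmul_vinv vmul_H_right by metis
qed

lemma vmul_cancel:
  assumes "frac_div H A" "frac_div H B" "frac_div H C" "vmul A C = vmul B C"
  shows "A = B"
  using vmul_cancel_subset assms by (metis order_refl subset_antisym)

lemma vmul_vinv_cancel_left:
  assumes "frac_div H A" "frac_div H B"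
  shows "vmul A (vmul (vinv H A) B) = B"
  using vmul_assoc[OF assms(1) frac_div_vinv[OF assms(1)] assms(2)] vmul_vinv[OF assms(1)]
    vmul_H_left[OF assms(2)] by simp

lemma XH_subset_H: "P \<in> XH H \<Longrightarrow> P \<subseteq> H"
  unfolding XH_def prime_ideal_def by auto

lemma XH_neq_H: "P \<in> XH H \<Longrightarrow> P \<noteq> H"
  unfolding XH_def prime_ideal_def by auto

lemma XH_frac_div: assumes "P \<in> XH H" shows "frac_div H P"
  using assms XH_subset_H[OF assms] H_subset_qgrp zero_mem
  unfolding XH_def div_ideal_def frac_div_def by (auto intro!: bexI[of _ 0])

lemma XH_setsum_subset:
  assumes P: "P \<in> XH H" and "X \<subseteq> H" "Y \<subseteq> H" "setsum X Y \<subseteq> P"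
  shows "X \<subseteq> P \<or> Y \<subseteq> P"
proof (rule ccontr)
  assume "\<not> (X \<subseteq> P \<or> Y \<subseteq> P)"
  then obtain x y where "x \<in> X" "x \<notin> P" "y \<in> Y" "y \<notin> P" by auto
  moreover have "x + y \<in> P" using assms(4) calculation unfolding setsum_def by auto
  ultimately show False using P assms(2,3) unfolding XH_def prime_ideal_def by blast
qed

lemma XH_vmul_subset:
  assumes "P \<in> XH H" "A \<subseteq> H" "B \<subseteq> H" "vmul A B \<subseteq> P"
  shows "A \<subseteq> P \<or> B \<subseteq> P"
  using XH_setsum_subset[OF assms(1-3)] setsum_subset_vmul[of A B] assms H_subset_qgrp by auto

lemma XH_subset_imp_eq:
  assumes P: "P \<in> XH H" and Q: "Q \<in> XH H" and QP: "Q \<subseteq> P"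
  shows "Q = P"
proof (rule ccontr)
  assume "Q \<noteq> P"
  have DP: "frac_div H P" and DQ: "frac_div H Q" using XH_frac_div P Q by auto
  define C where "C = vmul (vinv H P) Q"
  have "C \<subseteq> vmul (vinv H P) P" unfolding C_def using vmul_mono[OF QP] vmul_commute by metis
  then have CH: "C \<subseteq> H" using vmul_vinv[OF DP] vmul_commute by metis
  have PC: "vmul P C = Q" unfolding C_def by (rule vmul_vinv_cancel_left[OF DP DQ])
  have "\<not> P \<subseteq> Q" using \<open>Q \<noteq> P\<close> QP by auto
  then have "C \<subseteq> Q" using XH_vmul_subset[OF Q XH_subset_H[OF P] CH] PC by auto
  then have "vmul P C \<subseteq> vmul P Q" using vmul_mono vmul_commute by metis
  then have "vmul H Q \<subseteq> vmul P Q" using PC vmul_H_left[OF DQ] by simp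
  then have "H \<subseteq> P" using vmul_cancel_subset[OF frac_div_H DP DQ] by auto
  then show False using XH_subset_H[OF P] XH_neq_H[OF P] by auto
qed

end

section \<open>Unique factorization of divisorial ideals\<close>

definition dsupp :: "('b \<Rightarrow> nat) \<Rightarrow> 'b set" where
  "dsupp e = {Q. 0 < e Q}"

lemma dsupp_zero [simp]: "dsupp (\<lambda>_. 0) = {}"
  unfolding dsupp_def by simp

lemma idprod_over:
  assumes "finite K" "dsupp e \<subseteq> K"
  shows "idprod e = {(\<Sum>P\<in>K. \<Sum>i<e P. x P i) | x. \<forall>P\<in>K. \<forall>i<e P. x P i \<in> P}"
proof -
  have "(\<Sum>P\<in>{Q. 0 < e Q}. \<Sum>i<e P. x P i) = (\<Sum>P\<in>K. \<Sum>i<e P. x P i)"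
    for x :: "'a set \<Rightarrow> nat \<Rightarrow> 'a::ab_group_add"
    by (rule sum.mono_neutral_left) (use assms in \<open>auto simp: dsupp_def\<close>)
  moreover have "(\<forall>P\<in>{Q. 0 < e Q}. \<forall>i<e P. x P i \<in> P) \<longleftrightarrow> (\<forall>P\<in>K. \<forall>i<e P. x P i \<in> P)"
    for x :: "'a set \<Rightarrow> nat \<Rightarrow> 'a"
    using assms by (auto simp: dsupp_def)
  ultimately show ?thesis unfolding idprod_def by simp
qed

lemma sum_fun_upd_Suc:
  fixes x :: "'b \<Rightarrow> nat \<Rightarrow> 'a::comm_monoid_add"
  assumes "finite K" "P \<in> K"
  shows "(\<Sum>Q\<in>K. \<Sum>i<(e(P := Suc (e P))) Q. x Q i) = x P (e P) + (\<Sum>Q\<in>K. \<Sum>i<e Q. x Q i)"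
proof -
  have "(\<Sum>Q\<in>K. \<Sum>i<(e(P := Suc (e P))) Q. x Q i) =
        (\<Sum>i<Suc (e P). x P i) + (\<Sum>Q\<in>K-{P}. \<Sum>i<(e(P := Suc (e P))) Q. x Q i)"
    using sum.remove[OF assms, of "\<lambda>Q. \<Sum>i<(e(P := Suc (e P))) Q. x Q i"] by simp
  also have "(\<Sum>Q\<in>K-{P}. \<Sum>i<(e(P := Suc (e P))) Q. x Q i) = (\<Sum>Q\<in>K-{P}. \<Sum>i<e Q. x Q i)"
    by (rule sum.cong) auto
  also have "(\<Sum>i<Suc (e P). x P i) = x P (e P) + (\<Sum>i<e P. x P i)"
    by (simp add: add.commute)
  also have "(\<Sum>Q\<in>K. \<Sum>i<e Q. x Q i) = (\<Sum>i<e P. x P i) + (\<Sum>Q\<in>K-{P}. \<Sum>i<e Q. x Q i)"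
    using sum.remove[OF assms, of "\<lambda>Q. \<Sum>i<e Q. x Q i"] by simp
  ultimately show ?thesis by (simp add: add.assoc)
qed

lemma idprod_zero: "idprod (\<lambda>_. 0) = {0}"
  unfolding idprod_def by auto

lemma idprod_fun_upd_Suc:
  assumes "finite (dsupp e)"
  shows "idprod (e(P := Suc (e P))) = setsum P (idprod e)"
proof -
  define K where "K = insert P (dsupp e)"
  have K: "finite K" "P \<in> K" using assms by (auto simp: K_def)
  have e_K: "dsupp e \<subseteq> K" and e'_K: "dsupp (e(P := Suc (e P))) \<subseteq> K"
    by (auto simp: K_def dsupp_def)
  show ?thesis
  proof (intro equalityI subsetI)
    fix z assume "z \<in> idprod (e(P := Suc (e P)))"
    then obtain x where x: "z = (\<Sum>Q\<in>K. \<Sum>i<(e(P := Suc (e P))) Q. x Q i)"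
      "\<forall>Q\<in>K. \<forall>i<(e(P := Suc (e P))) Q. x Q i \<in> Q"
      unfolding idprod_over[OF K(1) e'_K] by blast
    have "z = x P (e P) + (\<Sum>Q\<in>K. \<Sum>i<e Q. x Q i)" using x(1) sum_fun_upd_Suc[OF K] by simp
    moreover have "x P (e P) \<in> P" using x(2) K(2) by auto
    moreover have "\<forall>Q\<in>K. \<forall>i<e Q. x Q i \<in> Q"
      using x(2) by (metis fun_upd_other fun_upd_same less_SucI)
    then have "(\<Sum>Q\<in>K. \<Sum>i<e Q. x Q i) \<in> idprod e" unfolding idprod_over[OF K(1) e_K] by blast
    ultimately show "z \<in> setsum P (idprod e)" unfolding setsum_def by blast
  next
    fix z assume "z \<in> setsum P (idprod e)"
    then obtain p x where px: "z = p + (\<Sum>Q\<in>K. \<Sum>i<e Q. x Q i)" "p \<in> P"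
      "\<forall>Q\<in>K. \<forall>i<e Q. x Q i \<in> Q"
      unfolding setsum_def idprod_over[OF K(1) e_K] by blast
    define x' where "x' = x(P := (x P)(e P := p))"
    have "(\<Sum>Q\<in>K. \<Sum>i<e Q. x' Q i) = (\<Sum>Q\<in>K. \<Sum>i<e Q. x Q i)"
      by (rule sum.cong, simp, rule sum.cong) (auto simp: x'_def)
    then have "z = (\<Sum>Q\<in>K. \<Sum>i<(e(P := Suc (e P))) Q. x' Q i)"
      using px(1) sum_fun_upd_Suc[OF K, of x' e] by (simp add: x'_def)
    moreover have "\<forall>Q\<in>K. \<forall>i<(e(P := Suc (e P))) Q. x' Q i \<in> Q"
      using px(2,3) by (auto simp: x'_def less_Suc_eq)
    ultimately show "z \<in> idprod (e(P := Suc (e P)))" unfolding idprod_over[OF K(1) e'_K] by blast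
  qed
qed

context krull
begin

text \<open>Divisors are the elements of the free abelian monoid on \<open>\<frak>X(H)\<close>.\<close>

definition is_divisor :: "('a set \<Rightarrow> nat) \<Rightarrow> bool" where
  "is_divisor e \<longleftrightarrow> finite (dsupp e) \<and> dsupp e \<subseteq> XH H"

lemma is_divisor_zero: "is_divisor (\<lambda>_. 0)"
  unfolding is_divisor_def by simp

lemma is_divisor_add: "is_divisor e \<Longrightarrow> is_divisor f \<Longrightarrow> is_divisor (\<lambda>Q. e Q + f Q)"
  unfolding is_divisor_def dsupp_def
  by (auto intro: finite_subset[of _ "{Q. 0 < e Q} \<union> {Q. 0 < f Q}"])

lemma is_divisor_le:
  assumes "is_divisor e" "\<And>Q. f Q \<le> e Q" shows "is_divisor f"
proof -
  have "dsupp f \<subseteq> dsupp e" using assms(2) unfolding dsupp_def by (auto intro: less_le_trans)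
  then show ?thesis using assms(1) unfolding is_divisor_def by (auto intro: finite_subset)
qed

lemma is_divisor_subset: "finite T \<Longrightarrow> T \<subseteq> XH H \<Longrightarrow> dsupp e \<subseteq> T \<Longrightarrow> is_divisor e"
  unfolding is_divisor_def by (auto intro: finite_subset)

lemma is_divisor_induct [consumes 1, case_names zero step]:
  assumes "is_divisor e" "\<Phi> (\<lambda>_. 0)"
    "\<And>e P. is_divisor e \<Longrightarrow> P \<in> XH H \<Longrightarrow> \<Phi> e \<Longrightarrow> \<Phi> (e(P := Suc (e P)))"
  shows "\<Phi> e"
  using assms(1)
proof (induction "sum e (dsupp e)" arbitrary: e rule: less_induct)
  case less
  show ?case
  proof (cases "dsupp e = {}")
    case True
    then have "e = (\<lambda>_. 0)" by (auto simp: dsupp_def)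
    then show ?thesis using assms(2) by simp
  next
    case False
    then obtain P where P: "P \<in> dsupp e" by auto
    define e0 where "e0 = e(P := e P - 1)"
    have e: "e = e0(P := Suc (e0 P))" using P by (auto simp: e0_def dsupp_def)
    have sub: "dsupp e0 \<subseteq> dsupp e" by (auto simp: e0_def dsupp_def)
    have fin: "finite (dsupp e)" and PX: "P \<in> XH H"
      using less.prems P by (auto simp: is_divisor_def)
    have e0: "is_divisor e0" using less.prems sub fin unfolding is_divisor_def by (auto intro: finite_subset)
    have "sum e0 (dsupp e0) = sum e0 (dsupp e)"
      by (rule sum.mono_neutral_left) (use fin sub in \<open>auto simp: dsupp_def\<close>)
    also have "\<dots> < sum e (dsupp e)"
      by (rule sum_strict_mono_ex1) (use fin P in \<open>auto simp: e0_def dsupp_def\<close>)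
    finally have "\<Phi> e0" using less.hyps e0 by blast
    then show ?thesis using assms(3)[OF e0 PX] e by simp
  qed
qed

lemma idprod_subset_H: "is_divisor e \<Longrightarrow> idprod e \<subseteq> H"
proof (induction rule: is_divisor_induct)
  case zero
  show ?case unfolding idprod_zero using zero_mem by simp
next
  case (step e P)
  have "setsum P (idprod e) \<subseteq> H"
    unfolding setsum_def using XH_subset_H[OF step(2)] step(3) add_mem by blast
  moreover have "idprod (e(P := Suc (e P))) = setsum P (idprod e)"
    by (rule idprod_fun_upd_Suc) (use step(1) in \<open>simp add: is_divisor_def\<close>)
  ultimately show ?case by (simp only:)
qed

lemma vprod_zero: "vprod H (\<lambda>_. 0) = H"
  unfolding vprod_def idprod_zero vclos_zero ..

lemma vprod_fun_upd_Suc: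
  assumes "is_divisor e" "P \<in> XH H"
  shows "vprod H (e(P := Suc (e P))) = vmul P (vprod H e)"
proof -
  have "vprod H (e(P := Suc (e P))) = vclos H (setsum P (idprod e))"
    unfolding vprod_def using idprod_fun_upd_Suc[of e P] assms(1) by (simp add: is_divisor_def)
  also have "\<dots> = vmul P (vprod H e)" unfolding vmul_def vprod_def
    by (rule vclos_setsum_vclos_right[symmetric])
      (use XH_subset_H[OF assms(2)] idprod_subset_H[OF assms(1)] H_subset_qgrp in auto)
  finally show ?thesis .
qed

lemma vprod_frac_div: "is_divisor e \<Longrightarrow> frac_div H (vprod H e)"
  and vprod_subset_H: "is_divisor e \<Longrightarrow> vprod H e \<subseteq> H"
proof -
  assume "is_divisor e"
  then have "frac_div H (vprod H e) \<and> vprod H e \<subseteq> H"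
  proof (induction rule: is_divisor_induct)
    case zero
    then show ?case using vprod_zero frac_div_H by auto
  next
    case (step e P)
    have "vmul P (vprod H e) \<subseteq> vprod H e"
      using vmul_subset_right step(3) XH_subset_H[OF step(2)] by blast
    then show ?case
      using vprod_fun_upd_Suc[OF step(1,2)] frac_div_vmul[OF XH_frac_div[OF step(2)]] step(3)
      by (simp only:) blast
  qed
  then show "frac_div H (vprod H e)" "vprod H e \<subseteq> H" by blast+
qed

lemma vprod_add:
  assumes "is_divisor e" "is_divisor f"
  shows "vprod H (\<lambda>Q. e Q + f Q) = vmul (vprod H e) (vprod H f)"
  using assms(2)
proof (induction rule: is_divisor_induct)
  case zero
  then show ?case using vmul_H_right vprod_zero vprod_frac_div[OF assms(1)] by simp
next
  case (step f P)
  have D: "frac_div H (vprod H e)" "frac_div H (vprod H f)" "frac_div H P"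
    using vprod_frac_div assms(1) step(1) XH_frac_div step(2) by auto
  have "(\<lambda>Q. e Q + (f(P := Suc (f P))) Q) = (\<lambda>Q. e Q + f Q)(P := Suc (e P + f P))" by auto
  then have "vprod H (\<lambda>Q. e Q + (f(P := Suc (f P))) Q) = vmul P (vprod H (\<lambda>Q. e Q + f Q))"
    using vprod_fun_upd_Suc[OF is_divisor_add[OF assms(1) step(1)] step(2)] by simp
  also have "\<dots> = vmul P (vmul (vprod H e) (vprod H f))" using step by simp
  also have "\<dots> = vmul (vmul P (vprod H e)) (vprod H f)"
    using vmul_assoc[OF D(3,1,2)] by simp
  also have "\<dots> = vmul (vmul (vprod H e) P) (vprod H f)"
    by (simp only: vmul_commute[of P])
  also have "\<dots> = vmul (vprod H e) (vmul P (vprod H f))"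
    using vmul_assoc[OF D(1,3,2)] by simp
  also have "\<dots> = vmul (vprod H e) (vprod H (f(P := Suc (f P))))"
    using vprod_fun_upd_Suc step by simp
  finally show ?case .
qed

lemma vprod_subset_XH_imp_pos:
  assumes e: "is_divisor e" and P: "P \<in> XH H" and sub: "vprod H e \<subseteq> P"
  shows "0 < e P"
proof -
  have "idprod e \<subseteq> vprod H e"
    unfolding vprod_def by (rule vclos_ext) (use idprod_subset_H[OF e] H_subset_qgrp in blast)
  then have "idprod e \<subseteq> P" using sub by blast
  moreover have "idprod e \<subseteq> P \<Longrightarrow> \<exists>Q. 0 < e Q \<and> Q \<subseteq> P"
    using e
  proof (induction rule: is_divisor_induct)
    case zero
    then have "0 \<in> P" using idprod_zero by auto
    then have "H \<subseteq> P" using P unfolding XH_def prime_ideal_def by force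
    then show ?case using XH_neq_H[OF P] XH_subset_H[OF P] by auto
  next
    case (step e R)
    have "idprod (e(R := Suc (e R))) = setsum R (idprod e)"
      by (rule idprod_fun_upd_Suc) (use step(1) in \<open>simp add: is_divisor_def\<close>)
    with step(4) have "setsum R (idprod e) \<subseteq> P" by (simp only:)
    then have "R \<subseteq> P \<or> idprod e \<subseteq> P"
      using XH_setsum_subset[OF P XH_subset_H[OF step(2)] idprod_subset_H[OF step(1)]] by blast
    then show ?case
    proof
      assume "R \<subseteq> P"
      then show ?case by (intro exI[of _ R]) auto
    next
      assume "idprod e \<subseteq> P"
      then obtain Q where "0 < e Q" "Q \<subseteq> P" using step(3) by blast
      then show ?case by (intro exI[of _ Q]) auto
    qed
  qed
  ultimately obtain Q where Q: "0 < e Q" "Q \<subseteq> P" by blast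
  then have "Q \<in> XH H" using e unfolding is_divisor_def dsupp_def by auto
  then have "Q = P" using XH_subset_imp_eq[OF P] Q(2) by blast
  then show ?thesis using Q(1) by simp
qed

lemma vprod_antimono:
  assumes "is_divisor e" "\<And>Q. f Q \<le> e Q"
  shows "vprod H e \<subseteq> vprod H f"
proof -
  have f: "is_divisor f" and d: "is_divisor (\<lambda>Q. e Q - f Q)"
    using is_divisor_le[OF assms(1)] assms(2) by auto
  have "e = (\<lambda>Q. (e Q - f Q) + f Q)" using assms(2) by (auto simp: fun_eq_iff)
  then have "vprod H e = vmul (vprod H (\<lambda>Q. e Q - f Q)) (vprod H f)"
    using vprod_add[OF d f] by metis
  also have "\<dots> \<subseteq> vprod H f"
    using vmul_subset_right vprod_frac_div vprod_subset_H d f by blast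
  finally show ?thesis .
qed

lemma vprod_subset_imp_le:
  assumes "is_divisor f" "is_divisor e" "vprod H e \<subseteq> vprod H f"
  shows "f Q \<le> e Q"
  using assms
proof (induction arbitrary: e Q rule: is_divisor_induct)
  case zero
  then show ?case by simp
next
  case (step f P e Q)
  have DP: "frac_div H P" using XH_frac_div step(2) .
  have "vprod H e \<subseteq> vprod H (f(P := Suc (f P)))"
    using step(5) by (simp only: fun_upd_def)
  then have e_sub: "vprod H e \<subseteq> vmul P (vprod H f)"
    using vprod_fun_upd_Suc[OF step(1,2)] by simp
  also have "\<dots> = vmul (vprod H f) P" by (rule vmul_commute)
  also have "\<dots> \<subseteq> P" using vmul_subset_right[OF DP vprod_subset_H[OF step(1)]] .
  finally have "0 < e P" by (rule vprod_subset_XH_imp_pos[OF step(4) step(2)])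
  define e0 where "e0 = e(P := e P - 1)"
  have e: "e = e0(P := Suc (e0 P))" using \<open>0 < e P\<close> by (auto simp: e0_def)
  have e0: "is_divisor e0" using is_divisor_le[OF step(4)] by (simp add: e0_def)
  have "vmul P (vprod H e0) \<subseteq> vmul P (vprod H f)"
    using e_sub vprod_fun_upd_Suc[OF e0 step(2)] e by simp
  then have "vmul (vprod H e0) P \<subseteq> vmul (vprod H f) P"
    by (simp only: vmul_commute[of P])
  then have "vprod H e0 \<subseteq> vprod H f"
    by (rule vmul_cancel_subset[OF vprod_frac_div[OF e0] vprod_frac_div[OF step(1)] DP])
  then have "f R \<le> e0 R" for R using step.IH[OF e0] by blast
  then show ?case using e by (cases "Q = P") auto
qed

lemma vprod_inj:
  assumes "is_divisor e" "is_divisor f" "vprod H e = vprod H f"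
  shows "e = f"
proof
  fix Q show "e Q = f Q"
    using vprod_subset_imp_le[OF assms(1,2)] vprod_subset_imp_le[OF assms(2,1)] assms(3)
    by (simp add: le_antisym)
qed

text \<open>Existence of factorizations: v-noetherianity makes strict inclusion of integral
  divisorial ideals well-founded, and dividing by a divisorial prime above \<open>A\<close> enlarges \<open>A\<close>.\<close>

definition integral_div :: "'a set \<Rightarrow> bool" where
  "integral_div A \<longleftrightarrow> frac_div H A \<and> A \<subseteq> H"

lemma wf_integral_div_psupset: "wf {(B, A). integral_div A \<and> integral_div B \<and> A \<subset> B}"
  unfolding wf_iff_no_infinite_down_chain
proof
  assume "\<exists>f. \<forall>i. (f (Suc i), f i) \<in> {(B, A). integral_div A \<and> integral_div B \<and> A \<subset> B}"
  then obtain f where "\<forall>i. integral_div (f i) \<and> f i \<subset> f (Suc i)" by blast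
  then have f: "\<And>i. integral_div (f i) \<and> f i \<subset> f (Suc i)" by blast
  have "\<forall>i. div_ideal H (f i)" "\<forall>i. f i \<subseteq> f (Suc i)"
    using f unfolding integral_div_def div_ideal_def frac_div_def by auto
  then obtain N where "\<forall>i\<ge>N. f i = f N"
    using noetherian unfolding v_noetherian_def by blast
  then have "f (Suc N) = f N" using le_SucI[OF order_refl, of N] by blast
  then show False using f[of N] by simp
qed

lemma integral_div_add_mem: "integral_div M \<Longrightarrow> m \<in> M \<Longrightarrow> h \<in> H \<Longrightarrow> m + h \<in> M"
proof -
  assume "integral_div M" "m \<in> M" "h \<in> H"
  then have "m + h \<in> setsum M H" "M \<subseteq> qgrp H" "frac_div H M"
    unfolding setsum_def integral_div_def using H_subset_qgrp by auto
  then show "m + h \<in> M" using setsum_subset_vmul[OF _ H_subset_qgrp] vmul_H_right by blast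
qed

text \<open>By maximality \<open>M \<union> aH\<close> generates \<open>H\<close> as a divisorial ideal, and \<open>b(M \<union> aH) \<subseteq> M\<close>
  then gives \<open>bH \<subseteq> M\<close>.\<close>

lemma maximal_integral_div_prime:
  assumes M: "integral_div M" and max: "\<And>B. integral_div B \<Longrightarrow> M \<subset> B \<Longrightarrow> B = H"
    and ab: "a \<in> H" "b \<in> H" "a + b \<in> M" "a \<notin> M"
  shows "b \<in> M"
proof -
  have DM: "frac_div H M" and MH: "M \<subseteq> H" using M by (auto simp: integral_div_def)
  define X where "X = M \<union> translate a H"
  have XH: "X \<subseteq> H" unfolding X_def translate_def using MH add_mem ab(1) by auto
  then have XQ: "X \<subseteq> qgrp H" using H_subset_qgrp by auto
  have "a \<in> X" unfolding X_def using mem_translate_self[OF zero_mem, of a] by blast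
  then have aX: "a \<in> vclos H X" using vclos_ext[OF XQ] by auto
  have MX: "M \<subseteq> vclos H X" using vclos_ext[OF XQ] unfolding X_def by auto
  have "integral_div (vclos H X)" unfolding integral_div_def frac_div_def
    using vclos_subset_H[OF XH] vclos_subset_qgrp vclos_idem[OF XQ] aX zero_mem
    by (auto intro!: bexI[of _ 0])
  moreover have "M \<subset> vclos H X" using MX aX ab(4) by auto
  ultimately have X_H: "vclos H X = H" using max by blast
  have "translate b X \<subseteq> M"
  proof
    fix z assume "z \<in> translate b X"
    then obtain y where y: "z = b + y" "y \<in> X" unfolding translate_def by auto
    show "z \<in> M"
    proof (cases "y \<in> M")
      case True
      then show ?thesis using integral_div_add_mem[OF M True ab(2)] y by (simp add: add.commute)
    next
      case False
      then obtain h where "y = a + h" "h \<in> H" using y(2) unfolding X_def translate_def by auto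
      then show ?thesis using integral_div_add_mem[OF M ab(3) \<open>h \<in> H\<close>] y by (simp add: add_ac)
    qed
  qed
  then have "vclos H (translate b X) \<subseteq> vclos H M" by (rule vclos_mono)
  then have "vclos H (translate b X) \<subseteq> M" using frac_div_vclos[OF DM] by simp
  moreover have "vclos H (translate b X) = translate b H"
    using vclos_translate[of b X] H_subset_qgrp ab(2) X_H by auto
  ultimately show ?thesis using mem_translate_self[OF zero_mem, of b] by auto
qed

lemma maximal_integral_div_XH:
  assumes M: "integral_div M" "M \<noteq> H"
    and max: "\<And>B. integral_div B \<Longrightarrow> M \<subset> B \<Longrightarrow> B = H"
  shows "M \<in> XH H"
proof -
  have DM: "frac_div H M" and MH: "M \<subseteq> H" using M(1) by (auto simp: integral_div_def)
  have "M \<noteq> {}" using DM unfolding frac_div_def by auto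
  then show ?thesis
    unfolding XH_def prime_ideal_def div_ideal_def
    using MH M(2) integral_div_add_mem[OF M(1)] maximal_integral_div_prime[OF M(1) max]
      frac_div_vclos[OF DM]
    by blast
qed

lemma exists_XH_above:
  assumes "integral_div A" "A \<noteq> H"
  obtains P where "P \<in> XH H" "A \<subseteq> P"
proof -
  have "A \<in> {B. integral_div B \<and> A \<subseteq> B \<and> B \<noteq> H}" using assms by auto
  then obtain M where M: "M \<in> {B. integral_div B \<and> A \<subseteq> B \<and> B \<noteq> H}"
    and min: "\<And>B. (B, M) \<in> {(B, A). integral_div A \<and> integral_div B \<and> A \<subset> B} \<Longrightarrow>
                B \<notin> {B. integral_div B \<and> A \<subseteq> B \<and> B \<noteq> H}"
    by (rule wfE_min[OF wf_integral_div_psupset]) blast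
  have "M \<in> XH H"
    by (rule maximal_integral_div_XH) (use M min in auto)
  then show ?thesis using that M by blast
qed

lemma integral_div_eq_vprod: "integral_div A \<Longrightarrow> \<exists>e. is_divisor e \<and> A = vprod H e"
proof (induction A rule: wf_induct_rule[OF wf_integral_div_psupset])
  case (1 A)
  show ?case
  proof (cases "A = H")
    case True
    then show ?thesis using is_divisor_zero vprod_zero by metis
  next
    case False
    then obtain P where P: "P \<in> XH H" "A \<subseteq> P" using exists_XH_above 1(2) by blast
    have DA: "frac_div H A" and AH: "A \<subseteq> H" using 1(2) by (auto simp: integral_div_def)
    have DP: "frac_div H P" using XH_frac_div[OF P(1)] .
    define B where "B = vmul (vinv H P) A"
    have DB: "frac_div H B" unfolding B_def using frac_div_vmul frac_div_vinv DP DA by auto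
    have PB: "vmul P B = A" unfolding B_def by (rule vmul_vinv_cancel_left[OF DP DA])
    have "B \<subseteq> vmul (vinv H P) P" unfolding B_def using vmul_mono[OF P(2)] vmul_commute by metis
    then have BH: "B \<subseteq> H" using vmul_vinv[OF DP] vmul_commute by metis
    have "A = vmul H A" using vmul_H_left[OF DA] by simp
    also have "\<dots> \<subseteq> B" unfolding B_def by (rule vmul_mono[OF H_subset_vinv[OF XH_subset_H[OF P(1)]]])
    finally have AB: "A \<subseteq> B" .
    have "A \<noteq> B"
    proof
      assume "A = B"
      then have "vmul P A = vmul H A" using PB vmul_H_left[OF DA] by simp
      then show False using vmul_cancel[OF DP frac_div_H DA] XH_neq_H[OF P(1)] by blast
    qed
    with 1 DB BH AB obtain e where e: "is_divisor e" "B = vprod H e"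
      unfolding integral_div_def by blast
    have "vprod H (e(P := Suc (e P))) = A" using vprod_fun_upd_Suc[OF e(1) P(1)] e(2) PB by simp
    moreover have "is_divisor (e(P := Suc (e P)))"
      using e(1) P(1) unfolding is_divisor_def dsupp_def
      by (auto intro: finite_subset[of _ "insert P {Q. 0 < e Q}"])
    ultimately show ?thesis by blast
  qed
qed

end

section \<open>The divisor of an element\<close>

context krull
begin

definition divisor :: "'a \<Rightarrow> 'a set \<Rightarrow> nat" where
  "divisor a = vval H (pideal H a)"

lemma pideal_eq_translate: "pideal H a = translate a H"
  unfolding pideal_def translate_def ..

lemma is_divisor_divisor: "a \<in> H \<Longrightarrow> is_divisor (divisor a)"
  and translate_eq_vprod_divisor: "a \<in> H \<Longrightarrow> translate a H = vprod H (divisor a)"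
proof -
  assume a: "a \<in> H"
  have "integral_div (translate a H)"
    unfolding integral_div_def using frac_div_translate[OF frac_div_H] H_subset_qgrp a add_mem
    by (auto simp: translate_def)
  then obtain e where e: "is_divisor e" "translate a H = vprod H e"
    using integral_div_eq_vprod by blast
  let ?P = "\<lambda>e. finite {Q. 0 < e Q} \<and> {Q. 0 < e Q} \<subseteq> XH H \<and> pideal H a = vprod H e"
  have "\<exists>!e. ?P e"
  proof (rule ex1I[of _ e])
    show "?P e" using e unfolding is_divisor_def dsupp_def pideal_eq_translate by blast
    fix f assume "?P f"
    then have "is_divisor f" "vprod H f = vprod H e"
      using e(2) unfolding is_divisor_def dsupp_def pideal_eq_translate by auto
    then show "f = e" using vprod_inj e(1) by blast
  qed
  then have "?P (divisor a)"
    unfolding divisor_def vval_def by (rule theI')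
  then show "is_divisor (divisor a)" "translate a H = vprod H (divisor a)"
    unfolding is_divisor_def dsupp_def pideal_eq_translate by blast+
qed

lemma divisor_unique:
  assumes "a \<in> H" "is_divisor e" "translate a H = vprod H e"
  shows "divisor a = e"
  using vprod_inj[OF is_divisor_divisor[OF assms(1)] assms(2)] translate_eq_vprod_divisor[OF assms(1)]
    assms(3) by simp

lemma supp_pideal: assumes "a \<in> H" shows "supp H (pideal H a) = dsupp (divisor a)"
  using is_divisor_divisor[OF assms] unfolding supp_def divisor_def is_divisor_def dsupp_def by auto

lemma translate_add_H:
  assumes "a \<in> qgrp H" "b \<in> qgrp H"
  shows "vmul (translate a H) (translate b H) = translate (a + b) H"
proof -
  have "vmul (translate a H) (translate b H) = translate a (vmul H (translate b H))"
    by (rule vmul_translate[OF assms(1)])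
  also have "\<dots> = translate a (translate b H)"
    using vmul_H_left[OF frac_div_translate[OF frac_div_H assms(2)]] by simp
  finally show ?thesis by (simp add: translate_translate)
qed

lemma divisor_add:
  assumes "a \<in> H" "b \<in> H"
  shows "divisor (a + b) = (\<lambda>Q. divisor a Q + divisor b Q)"
proof (rule divisor_unique)
  show "a + b \<in> H" using add_mem assms by blast
  show "is_divisor (\<lambda>Q. divisor a Q + divisor b Q)"
    using is_divisor_add is_divisor_divisor assms by blast
  have "translate (a + b) H = vmul (translate a H) (translate b H)"
    using translate_add_H assms H_subset_qgrp by auto
  also have "\<dots> = vprod H (\<lambda>Q. divisor a Q + divisor b Q)"
    using vprod_add is_divisor_divisor translate_eq_vprod_divisor assms by simp
  finally show "translate (a + b) H = vprod H (\<lambda>Q. divisor a Q + divisor b Q)" .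
qed

lemma dvd_iff_divisor_le:
  assumes "a \<in> H" "b \<in> H"
  shows "(\<exists>c\<in>H. b = a + c) \<longleftrightarrow> (\<forall>Q. divisor a Q \<le> divisor b Q)"
proof
  assume "\<exists>c\<in>H. b = a + c"
  then show "\<forall>Q. divisor a Q \<le> divisor b Q" using divisor_add assms(1) by auto
next
  assume "\<forall>Q. divisor a Q \<le> divisor b Q"
  then have "vprod H (divisor b) \<subseteq> vprod H (divisor a)"
    using vprod_antimono is_divisor_divisor[OF assms(2)] by blast
  then have "translate b H \<subseteq> translate a H"
    using translate_eq_vprod_divisor assms by simp
  then show "\<exists>c\<in>H. b = a + c"
    using mem_translate_self[OF zero_mem, of b] unfolding translate_def by auto
qed

lemma divisor_zero: "divisor 0 = (\<lambda>_. 0)"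
  using divisor_unique[OF zero_mem is_divisor_zero] vprod_zero by simp

lemma unit_iff_divisor_eq_zero:
  assumes "a \<in> H"
  shows "a \<in> unitsH H \<longleftrightarrow> divisor a = (\<lambda>_. 0)"
proof -
  have "divisor a = (\<lambda>_. 0) \<longleftrightarrow> (\<forall>Q. divisor a Q \<le> divisor 0 Q)"
    using divisor_zero by (simp add: fun_eq_iff)
  also have "\<dots> \<longleftrightarrow> (\<exists>c\<in>H. 0 = a + c)"
    by (rule dvd_iff_divisor_le[OF assms zero_mem, symmetric])
  also have "\<dots> \<longleftrightarrow> a \<in> unitsH H"
  proof
    assume "\<exists>c\<in>H. 0 = a + c"
    then obtain c where "c \<in> H" "0 = a + c" by blast
    moreover have "c = - a + (a + c)" by (rule minus_add_cancel[symmetric])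
    ultimately have "- a \<in> H" by simp
    then show "a \<in> unitsH H" unfolding unitsH_def using assms by simp
  next
    assume "a \<in> unitsH H"
    then show "\<exists>c\<in>H. 0 = a + c" unfolding unitsH_def by (auto intro: bexI[of _ "- a"])
  qed
  finally show ?thesis ..
qed

lemma associated_iff_divisor_eq:
  assumes "a \<in> H" "b \<in> H"
  shows "associated H a b \<longleftrightarrow> divisor a = divisor b"
proof
  assume "associated H a b"
  then obtain u where u: "u \<in> unitsH H" "b = a + u" unfolding associated_def by auto
  then have "u \<in> H" unfolding unitsH_def by auto
  then have "divisor u = (\<lambda>_. 0)" using unit_iff_divisor_eq_zero u(1) by blast
  then show "divisor a = divisor b" using divisor_add[OF assms(1) \<open>u \<in> H\<close>] u(2) by simp
next
  assume eq: "divisor a = divisor b"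
  then have "\<forall>Q. divisor a Q \<le> divisor b Q" by simp
  then obtain c where c: "c \<in> H" "b = a + c" using dvd_iff_divisor_le[OF assms] by blast
  then have "divisor b Q = divisor a Q + divisor c Q" for Q using divisor_add[OF assms(1)] by simp
  then have "divisor c = (\<lambda>_. 0)" using eq by (metis add_cancel_right_right)
  then have "c \<in> unitsH H" using unit_iff_divisor_eq_zero c(1) by blast
  then show "associated H a b" unfolding associated_def using c(2) by blast
qed

end

section \<open>The class group\<close>

context krull
begin

abbreviation Cl :: "'a set set monoid" where
  "Cl \<equiv> class_group H"

lemma cls_translate: "cls H A = {B. frac_div H B \<and> (\<exists>x\<in>qgrp H. B = translate x A)}"
  unfolding cls_def translate_def ..

lemma mem_cls_self: "frac_div H A \<Longrightarrow> A \<in> cls H A"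
  unfolding cls_translate using qgrp_zero translate_zero by blast

lemma cls_eq_iff:
  assumes A: "frac_div H A" and B: "frac_div H B"
  shows "cls H A = cls H B \<longleftrightarrow> (\<exists>x\<in>qgrp H. B = translate x A)"
proof
  assume "cls H A = cls H B"
  then have "B \<in> cls H A" using mem_cls_self[OF B] by simp
  then show "\<exists>x\<in>qgrp H. B = translate x A" unfolding cls_translate by blast
next
  assume "\<exists>x\<in>qgrp H. B = translate x A"
  then obtain x where x: "x \<in> qgrp H" "B = translate x A" by blast
  have "(\<exists>y\<in>qgrp H. C = translate y A) \<longleftrightarrow> (\<exists>y\<in>qgrp H. C = translate y B)" for C
  proof
    assume "\<exists>y\<in>qgrp H. C = translate y A"
    then obtain y where y: "y \<in> qgrp H" "C = translate y A" by blast
    then have "C = translate (y - x) B" using x by (simp add: translate_translate)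
    then show "\<exists>y\<in>qgrp H. C = translate y B" using qgrp_diff[OF y(1) x(1)] by blast
  next
    assume "\<exists>y\<in>qgrp H. C = translate y B"
    then obtain y where y: "y \<in> qgrp H" "C = translate y B" by blast
    then have "C = translate (y + x) A" using x by (simp add: translate_translate add.assoc)
    then show "\<exists>y\<in>qgrp H. C = translate y A" using qgrp_add[OF y(1) x(1)] by blast
  qed
  then show "cls H A = cls H B" unfolding cls_translate by blast
qed

lemma carrier_Cl: "carrier Cl = cls H ` {A. frac_div H A}"
  unfolding class_group_def by simp

lemma one_Cl: "\<one>\<^bsub>Cl\<^esub> = cls H H"
  unfolding class_group_def by simp

lemma cls_in_carrier: "frac_div H A \<Longrightarrow> cls H A \<in> carrier Cl"
  unfolding carrier_Cl by auto

text \<open>The multiplication of \<open>class_group\<close> picks representatives with \<open>SOME\<close>; v-multiplication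
  commutes with translations, so the choice does not matter.\<close>

lemma mult_Cl:
  assumes A: "frac_div H A" and B: "frac_div H B"
  shows "cls H A \<otimes>\<^bsub>Cl\<^esub> cls H B = cls H (vmul A B)"
proof -
  define A' where "A' = (SOME A'. A' \<in> cls H A)"
  define B' where "B' = (SOME B'. B' \<in> cls H B)"
  have "A' \<in> cls H A" unfolding A'_def using mem_cls_self[OF A] by (rule someI)
  then obtain x where x: "x \<in> qgrp H" "A' = translate x A" unfolding cls_translate by blast
  have "B' \<in> cls H B" unfolding B'_def using mem_cls_self[OF B] by (rule someI)
  then obtain y where y: "y \<in> qgrp H" "B' = translate y B" unfolding cls_translate by blast
  have xy: "x + y \<in> qgrp H" using qgrp_add[OF x(1) y(1)] .
  have "vmul A (translate y B) = vmul (translate y B) A" by (rule vmul_commute)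
  also have "\<dots> = translate y (vmul B A)" by (rule vmul_translate[OF y(1)])
  finally have "vmul A (translate y B) = translate y (vmul A B)" by (simp only: vmul_commute[of B])
  then have "vmul A' B' = translate (x + y) (vmul A B)"
    using x(2) y(2) vmul_translate[OF x(1)] by (simp add: translate_translate)
  moreover have "cls H A \<otimes>\<^bsub>Cl\<^esub> cls H B = cls H (vmul A' B')"
    unfolding class_group_def A'_def B'_def vmul_def by simp
  moreover have "cls H (translate (x + y) (vmul A B)) = cls H (vmul A B)"
    using cls_eq_iff[OF frac_div_vmul[OF A B] frac_div_translate[OF frac_div_vmul[OF A B] xy]] xy
    by blast
  ultimately show ?thesis by simp
qed

lemma comm_group_Cl: "comm_group Cl"
proof (rule comm_groupI)
  fix x y assume "x \<in> carrier Cl" "y \<in> carrier Cl"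
  then obtain A B where "frac_div H A" "frac_div H B" "x = cls H A" "y = cls H B"
    unfolding carrier_Cl by blast
  then show "x \<otimes>\<^bsub>Cl\<^esub> y \<in> carrier Cl" using mult_Cl frac_div_vmul cls_in_carrier by simp
next
  show "\<one>\<^bsub>Cl\<^esub> \<in> carrier Cl" unfolding one_Cl using cls_in_carrier frac_div_H .
next
  fix x y z assume "x \<in> carrier Cl" "y \<in> carrier Cl" "z \<in> carrier Cl"
  then obtain A B C where D: "frac_div H A" "frac_div H B" "frac_div H C"
    and xyz: "x = cls H A" "y = cls H B" "z = cls H C"
    unfolding carrier_Cl by blast
  show "x \<otimes>\<^bsub>Cl\<^esub> y \<otimes>\<^bsub>Cl\<^esub> z = x \<otimes>\<^bsub>Cl\<^esub> (y \<otimes>\<^bsub>Cl\<^esub> z)"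
    unfolding xyz mult_Cl[OF D(1,2)] mult_Cl[OF D(2,3)] mult_Cl[OF frac_div_vmul[OF D(1,2)] D(3)]
      mult_Cl[OF D(1) frac_div_vmul[OF D(2,3)]] vmul_assoc[OF D] ..
next
  fix x y assume "x \<in> carrier Cl" "y \<in> carrier Cl"
  then obtain A B where D: "frac_div H A" "frac_div H B" and xy: "x = cls H A" "y = cls H B"
    unfolding carrier_Cl by blast
  show "x \<otimes>\<^bsub>Cl\<^esub> y = y \<otimes>\<^bsub>Cl\<^esub> x"
    unfolding xy mult_Cl[OF D] mult_Cl[OF D(2,1)] vmul_commute[of A] ..
next
  fix x assume "x \<in> carrier Cl"
  then obtain A where D: "frac_div H A" and x: "x = cls H A" unfolding carrier_Cl by blast
  show "\<one>\<^bsub>Cl\<^esub> \<otimes>\<^bsub>Cl\<^esub> x = x"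
    unfolding x one_Cl mult_Cl[OF frac_div_H D] vmul_H_left[OF D] ..
  have "cls H (vinv H A) \<otimes>\<^bsub>Cl\<^esub> x = \<one>\<^bsub>Cl\<^esub>"
    unfolding x one_Cl mult_Cl[OF frac_div_vinv[OF D] D] vmul_commute[of "vinv H A"]
    using vmul_vinv[OF D] by simp
  then show "\<exists>y\<in>carrier Cl. y \<otimes>\<^bsub>Cl\<^esub> x = \<one>\<^bsub>Cl\<^esub>"
    using cls_in_carrier[OF frac_div_vinv[OF D]] by blast
qed

sublocale Cl: comm_group Cl
  by (rule comm_group_Cl)

definition dclass :: "('a set \<Rightarrow> nat) \<Rightarrow> 'a set set" where
  "dclass e = cls H (vprod H e)"

lemma dclass_in_carrier: "is_divisor e \<Longrightarrow> dclass e \<in> carrier Cl"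
  unfolding dclass_def using cls_in_carrier vprod_frac_div by blast

lemma dclass_zero: "dclass (\<lambda>_. 0) = \<one>\<^bsub>Cl\<^esub>"
  unfolding dclass_def vprod_zero one_Cl ..

lemma dclass_add:
  "is_divisor e \<Longrightarrow> is_divisor f \<Longrightarrow> dclass (\<lambda>Q. e Q + f Q) = dclass e \<otimes>\<^bsub>Cl\<^esub> dclass f"
  unfolding dclass_def using vprod_add mult_Cl vprod_frac_div by simp

lemma dclass_mult: assumes "is_divisor e" shows "dclass (\<lambda>Q. k * e Q) = dclass e [^]\<^bsub>Cl\<^esub> k"
proof (induction k)
  case 0
  then show ?case using dclass_zero by simp
next
  case (Suc k)
  have "is_divisor (\<lambda>Q. k * e Q)"
    using assms unfolding is_divisor_def dsupp_def by auto
  then have "dclass (\<lambda>Q. k * e Q + e Q) = dclass (\<lambda>Q. k * e Q) \<otimes>\<^bsub>Cl\<^esub> dclass e"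
    using dclass_add assms by simp
  then show ?case using Suc by (simp add: add.commute)
qed

lemma dclass_eq_one_iff:
  assumes e: "is_divisor e"
  shows "dclass e = \<one>\<^bsub>Cl\<^esub> \<longleftrightarrow> (\<exists>a\<in>H. divisor a = e)"
proof
  assume "dclass e = \<one>\<^bsub>Cl\<^esub>"
  then obtain x where x: "x \<in> qgrp H" "vprod H e = translate x H"
    using cls_eq_iff[OF frac_div_H vprod_frac_div[OF e]] one_Cl unfolding dclass_def by metis
  then have xH: "x \<in> H" using vprod_subset_H[OF e] mem_translate_self[OF zero_mem, of x] by auto
  then show "\<exists>a\<in>H. divisor a = e" using divisor_unique[OF xH e] x(2) by auto
next
  assume "\<exists>a\<in>H. divisor a = e"
  then obtain a where a: "a \<in> H" "divisor a = e" by blast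
  then have "vprod H e = translate a H" using translate_eq_vprod_divisor by simp
  then have "cls H H = cls H (vprod H e)"
    using cls_eq_iff[OF frac_div_H vprod_frac_div[OF e]] a(1) H_subset_qgrp by blast
  then show "dclass e = \<one>\<^bsub>Cl\<^esub>" unfolding dclass_def one_Cl by simp
qed

lemma dclass_divisor: "a \<in> H \<Longrightarrow> dclass (divisor a) = \<one>\<^bsub>Cl\<^esub>"
  using dclass_eq_one_iff is_divisor_divisor by blast

lemma cls_pow:
  assumes P: "P \<in> XH H"
  shows "cls H P [^]\<^bsub>Cl\<^esub> n = dclass (\<lambda>Q. if Q = P then n else 0)"
proof (induction n)
  case 0
  then show ?case using dclass_zero by simp
next
  case (Suc n)
  define e where "e = (\<lambda>Q. if Q = P then n else 0)"
  have e: "is_divisor e" using P unfolding is_divisor_def dsupp_def e_def by auto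
  have "(\<lambda>Q. if Q = P then Suc n else 0) = e(P := Suc (e P))" by (auto simp: e_def)
  then have "vprod H (\<lambda>Q. if Q = P then Suc n else 0) = vmul P (vprod H e)"
    using vprod_fun_upd_Suc[OF e P] by (simp only:)
  also have "\<dots> = vmul (vprod H e) P" by (rule vmul_commute)
  finally have "cls H (vprod H (\<lambda>Q. if Q = P then Suc n else 0)) = dclass e \<otimes>\<^bsub>Cl\<^esub> cls H P"
    unfolding dclass_def using mult_Cl vprod_frac_div[OF e] XH_frac_div[OF P] by simp
  then show ?case using Suc unfolding dclass_def e_def by simp
qed

lemma finprod_cls_pow:
  assumes "finite T" "T \<subseteq> XH H"
  shows "finprod Cl (\<lambda>p. cls H p [^]\<^bsub>Cl\<^esub> \<alpha> p) T = dclass (\<lambda>Q. if Q \<in> T then \<alpha> Q else 0)"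
  using assms
proof (induction T rule: finite_induct)
  case empty
  then show ?case using dclass_zero by simp
next
  case (insert P T)
  have P: "P \<in> XH H" and T: "T \<subseteq> XH H" using insert by auto
  have e: "is_divisor (\<lambda>Q. if Q = P then \<alpha> P else 0)"
    using P unfolding is_divisor_def dsupp_def by auto
  have f: "is_divisor (\<lambda>Q. if Q \<in> T then \<alpha> Q else 0)"
    by (rule is_divisor_subset[OF insert(1) T]) (auto simp: dsupp_def)
  have "(\<lambda>p. cls H p [^]\<^bsub>Cl\<^esub> \<alpha> p) \<in> T \<rightarrow> carrier Cl"
    using T XH_frac_div cls_in_carrier by auto
  then have "finprod Cl (\<lambda>p. cls H p [^]\<^bsub>Cl\<^esub> \<alpha> p) (insert P T)
      = cls H P [^]\<^bsub>Cl\<^esub> \<alpha> P \<otimes>\<^bsub>Cl\<^esub> finprod Cl (\<lambda>p. cls H p [^]\<^bsub>Cl\<^esub> \<alpha> p) T"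
    using Cl.finprod_insert[OF insert(1,2)] cls_in_carrier[OF XH_frac_div[OF P]] by simp
  also have "\<dots> = dclass (\<lambda>Q. if Q = P then \<alpha> P else 0) \<otimes>\<^bsub>Cl\<^esub> dclass (\<lambda>Q. if Q \<in> T then \<alpha> Q else 0)"
    using cls_pow[OF P] insert(3)[OF T] by simp
  also have "\<dots> = dclass (\<lambda>Q. (if Q = P then \<alpha> P else 0) + (if Q \<in> T then \<alpha> Q else 0))"
    using dclass_add[OF e f] by simp
  also have "(\<lambda>Q. (if Q = P then \<alpha> P else 0) + (if Q \<in> T then \<alpha> Q else 0))
      = (\<lambda>Q. if Q \<in> insert P T then \<alpha> Q else 0)"
    using insert(2) by auto
  finally show ?case .
qed

lemma finprod_cls_int_pow:
  assumes T: "finite T" "T \<subseteq> XH H"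
  shows "finprod Cl (\<lambda>p. cls H p [^]\<^bsub>Cl\<^esub> (int (u p) - int (w p))) T
           \<otimes>\<^bsub>Cl\<^esub> dclass (\<lambda>Q. if Q \<in> T then w Q else 0)
         = dclass (\<lambda>Q. if Q \<in> T then u Q else 0)"
proof -
  have c: "cls H p \<in> carrier Cl" if "p \<in> T" for p
    using cls_in_carrier XH_frac_div T(2) that by blast
  have pow: "cls H p [^]\<^bsub>Cl\<^esub> (int (u p) - int (w p)) \<otimes>\<^bsub>Cl\<^esub> cls H p [^]\<^bsub>Cl\<^esub> w p
      = cls H p [^]\<^bsub>Cl\<^esub> u p" if "p \<in> T" for p
    using Cl.int_pow_mult[OF c[OF that], of "int (u p) - int (w p)" "int (w p)"]
    by (simp add: int_pow_int)
  have "finprod Cl (\<lambda>p. cls H p [^]\<^bsub>Cl\<^esub> (int (u p) - int (w p))) T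
      \<otimes>\<^bsub>Cl\<^esub> finprod Cl (\<lambda>p. cls H p [^]\<^bsub>Cl\<^esub> w p) T
      = finprod Cl (\<lambda>p. cls H p [^]\<^bsub>Cl\<^esub> (int (u p) - int (w p)) \<otimes>\<^bsub>Cl\<^esub> cls H p [^]\<^bsub>Cl\<^esub> w p) T"
    by (rule Cl.finprod_multf[symmetric]) (use c in auto)
  also have "\<dots> = finprod Cl (\<lambda>p. cls H p [^]\<^bsub>Cl\<^esub> u p) T"
    by (rule Cl.finprod_cong'[OF refl]) (use c pow in auto)
  finally have "finprod Cl (\<lambda>p. cls H p [^]\<^bsub>Cl\<^esub> (int (u p) - int (w p))) T
      \<otimes>\<^bsub>Cl\<^esub> finprod Cl (\<lambda>p. cls H p [^]\<^bsub>Cl\<^esub> w p) T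
      = finprod Cl (\<lambda>p. cls H p [^]\<^bsub>Cl\<^esub> u p) T" .
  then show ?thesis using finprod_cls_pow[OF T] by simp
qed

end

section \<open>Factorization into irreducibles\<close>

lemma sum_dsupp_add_less:
  assumes "finite (dsupp e)" "finite (dsupp f)" "f \<noteq> (\<lambda>_. 0)"
  shows "sum e (dsupp e) < sum (\<lambda>Q. e Q + f Q) (dsupp (\<lambda>Q. e Q + f Q))"
proof -
  let ?g = "\<lambda>Q. e Q + f Q"
  have fin: "finite (dsupp ?g)"
    using assms(1,2) by (rule finite_subset[rotated, OF finite_UnI]) (auto simp: dsupp_def)
  have "sum e (dsupp e) = sum e (dsupp ?g)"
    by (rule sum.mono_neutral_left) (use fin in \<open>auto simp: dsupp_def\<close>)
  also have "\<dots> < sum ?g (dsupp ?g)"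
  proof (rule sum_strict_mono_ex1[OF fin])
    obtain Q where "f Q \<noteq> 0" using assms(3) by auto
    then show "\<exists>x\<in>dsupp ?g. e x < e x + f x" by (intro bexI[of _ Q]) (auto simp: dsupp_def)
  qed simp
  finally show ?thesis .
qed

context krull
begin

lemma irred_mem: "irred H x \<Longrightarrow> x \<in> H"
  unfolding irred_def by auto

lemma irred_not_unit: "irred H x \<Longrightarrow> x \<notin> unitsH H"
  unfolding irred_def by auto

lemma irred_divisor_nonzero: "irred H x \<Longrightarrow> divisor x \<noteq> (\<lambda>_. 0)"
  using unit_iff_divisor_eq_zero irred_mem irred_not_unit by blast

lemma divisor_sum_list:
  "\<forall>x\<in>set xs. x \<in> H \<Longrightarrow> divisor (sum_list xs) = (\<lambda>Q. \<Sum>x\<leftarrow>xs. divisor x Q)"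
proof (induction xs)
  case Nil
  then show ?case using divisor_zero by simp
next
  case (Cons x xs)
  have "sum_list xs \<in> H"
    using Cons.prems by (induction xs) (auto simp: zero_mem add_mem)
  then show ?case using Cons divisor_add by simp
qed

lemma nmul_mem: "x \<in> H \<Longrightarrow> nmul n x \<in> H"
  by (induction n) (auto simp: nmul_def zero_mem add_mem)

lemma divisor_nmul: "x \<in> H \<Longrightarrow> divisor (nmul n x) = (\<lambda>Q. n * divisor x Q)"
proof (induction n)
  case 0
  then show ?case using divisor_zero by (simp add: nmul_def)
next
  case (Suc n)
  then show ?case using divisor_add nmul_mem by (simp add: nmul_def)
qed

lemma exists_irred_factorization:
  "b \<in> H \<Longrightarrow> b \<notin> unitsH H \<Longrightarrow>
     \<exists>xs. xs \<noteq> [] \<and> (\<forall>x\<in>set xs. irred H x) \<and> sum_list xs = b"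
proof (induction "sum (divisor b) (dsupp (divisor b))" arbitrary: b rule: less_induct)
  case less
  show ?case
  proof (cases "irred H b")
    case True
    then show ?thesis by (intro exI[of _ "[b]"]) simp
  next
    case False
    then obtain y z where yz: "y \<in> H" "z \<in> H" "b = y + z" "y \<notin> unitsH H" "z \<notin> unitsH H"
      using less.prems unfolding irred_def by blast
    have fin: "finite (dsupp (divisor y))" "finite (dsupp (divisor z))"
      using is_divisor_divisor yz unfolding is_divisor_def by auto
    have nz: "divisor y \<noteq> (\<lambda>_. 0)" "divisor z \<noteq> (\<lambda>_. 0)"
      using unit_iff_divisor_eq_zero yz by auto
    have "divisor b = (\<lambda>Q. divisor y Q + divisor z Q)"
      using divisor_add yz by simp
    moreover have "divisor b = (\<lambda>Q. divisor z Q + divisor y Q)"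
      using divisor_add yz by (simp add: add.commute)
    ultimately obtain xs ys where
      "xs \<noteq> []" "\<forall>x\<in>set xs. irred H x" "sum_list xs = y"
      "ys \<noteq> []" "\<forall>x\<in>set ys. irred H x" "sum_list ys = z"
      using less.hyps yz sum_dsupp_add_less[OF fin nz(2)] sum_dsupp_add_less[OF fin(2,1) nz(1)]
      by metis
    then show ?thesis using yz by (intro exI[of _ "xs @ ys"]) auto
  qed
qed

lemma exists_irred_dvd:
  assumes "b \<in> H" "b \<notin> unitsH H"
  obtains u where "irred H u" "\<And>Q. divisor u Q \<le> divisor b Q"
proof -
  obtain x xs where xs: "\<forall>x\<in>set (x # xs). irred H x" "sum_list (x # xs) = b"
    using exists_irred_factorization[OF assms] by (metis list.exhaust)
  then have "divisor b = (\<lambda>Q. \<Sum>y\<leftarrow>x # xs. divisor y Q)"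
    using divisor_sum_list irred_mem by metis
  then show ?thesis using xs by (intro that[of x]) auto
qed

lemma irred_add_unit:
  assumes x: "irred H x" and c: "c \<in> unitsH H"
  shows "irred H (x + c)"
proof -
  have xH: "x \<in> H" and cH: "c \<in> H" "- c \<in> H" using assms unfolding irred_def unitsH_def by auto
  have "divisor (x + c) = divisor x"
    using divisor_add[OF xH cH(1)] unit_iff_divisor_eq_zero[OF cH(1)] c by simp
  then have "x + c \<notin> unitsH H"
    using unit_iff_divisor_eq_zero xH add_mem[OF xH cH(1)] irred_not_unit[OF x] by metis
  moreover have "y \<in> unitsH H \<or> z \<in> unitsH H" if yz: "y \<in> H" "z \<in> H" "x + c = y + z" for y z
  proof -
    have "x = y + (z + - c)" using yz(3) by (simp add: algebra_simps)
    then have "y \<in> unitsH H \<or> z + - c \<in> unitsH H"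
      using x yz(1) add_mem[OF yz(2) cH(2)] unfolding irred_def by blast
    moreover have "- z \<in> H" if "z + - c \<in> unitsH H"
      using add_mem[of "- (z + - c)" "- c"] that cH(2) unfolding unitsH_def by simp
    ultimately show ?thesis using yz(2) unfolding unitsH_def by blast
  qed
  ultimately show ?thesis using add_mem[OF xH cH(1)] unfolding irred_def by blast
qed

end

section \<open>Relations among the classes of divisorial primes\<close>

context krull
begin

text \<open>A relation is a divisor with trivial class. Over \<open>\<int>\<close>, a relation \<open>\<alpha>\<close> is recorded
  through its positive and negative parts, i.e. as two divisors with the same class.\<close>

definition nat_dependent :: "'a set set \<Rightarrow> bool" where
  "nat_dependent T \<longleftrightarrow> (\<exists>e. dsupp e \<subseteq> T \<and> e \<noteq> (\<lambda>_. 0) \<and> dclass e = \<one>\<^bsub>Cl\<^esub>)"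

definition int_dependent :: "'a set set \<Rightarrow> bool" where
  "int_dependent T \<longleftrightarrow> (\<exists>u w. dsupp u \<subseteq> T \<and> dsupp w \<subseteq> T \<and> u \<noteq> w \<and> dclass u = dclass w)"

lemma restrict_dsupp: "dsupp e \<subseteq> T \<Longrightarrow> (\<lambda>Q. if Q \<in> T then e Q else 0) = e"
  unfolding dsupp_def by (auto simp: fun_eq_iff)

lemma nonzero_at_dsupp: "dsupp e \<subseteq> T \<Longrightarrow> e p \<noteq> 0 \<Longrightarrow> p \<in> T"
  unfolding dsupp_def by auto

lemma nat_dependent_iff:
  assumes T: "finite T" "T \<subseteq> XH H"
  shows "(\<exists>\<alpha>::'a set \<Rightarrow> nat. (\<exists>p\<in>T. \<alpha> p \<noteq> 0) \<and> finprod Cl (\<lambda>p. cls H p [^]\<^bsub>Cl\<^esub> \<alpha> p) T = \<one>\<^bsub>Cl\<^esub>)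
    \<longleftrightarrow> nat_dependent T"
proof
  assume "\<exists>\<alpha>::'a set \<Rightarrow> nat. (\<exists>p\<in>T. \<alpha> p \<noteq> 0) \<and> finprod Cl (\<lambda>p. cls H p [^]\<^bsub>Cl\<^esub> \<alpha> p) T = \<one>\<^bsub>Cl\<^esub>"
  then obtain \<alpha> :: "'a set \<Rightarrow> nat" and p where "p \<in> T" "\<alpha> p \<noteq> 0"
    "dclass (\<lambda>Q. if Q \<in> T then \<alpha> Q else 0) = \<one>\<^bsub>Cl\<^esub>"
    using finprod_cls_pow[OF T] by auto
  then show "nat_dependent T" unfolding nat_dependent_def dsupp_def
    by (intro exI[of _ "\<lambda>Q. if Q \<in> T then \<alpha> Q else 0"]) (auto simp: fun_eq_iff)
next
  assume "nat_dependent T"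
  then obtain e p where e: "dsupp e \<subseteq> T" "e p \<noteq> 0" "dclass e = \<one>\<^bsub>Cl\<^esub>"
    unfolding nat_dependent_def by (auto simp: fun_eq_iff)
  have "finprod Cl (\<lambda>p. cls H p [^]\<^bsub>Cl\<^esub> e p) T = \<one>\<^bsub>Cl\<^esub>"
    using finprod_cls_pow[OF T, of e] restrict_dsupp[OF e(1)] e(3) by simp
  moreover have "p \<in> T" using nonzero_at_dsupp[OF e(1,2)] .
  ultimately show "\<exists>\<alpha>::'a set \<Rightarrow> nat. (\<exists>p\<in>T. \<alpha> p \<noteq> 0) \<and> finprod Cl (\<lambda>p. cls H p [^]\<^bsub>Cl\<^esub> \<alpha> p) T = \<one>\<^bsub>Cl\<^esub>"
    using e(2) by blast
qed

lemma finprod_cls_int_pow_eq_one_iff: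
  assumes T: "finite T" "T \<subseteq> XH H"
  shows "finprod Cl (\<lambda>p. cls H p [^]\<^bsub>Cl\<^esub> (int (u p) - int (w p))) T = \<one>\<^bsub>Cl\<^esub>
      \<longleftrightarrow> dclass (\<lambda>Q. if Q \<in> T then u Q else 0) = dclass (\<lambda>Q. if Q \<in> T then w Q else 0)"
proof -
  let ?X = "finprod Cl (\<lambda>p. cls H p [^]\<^bsub>Cl\<^esub> (int (u p) - int (w p))) T"
  let ?w = "dclass (\<lambda>Q. if Q \<in> T then w Q else 0)"
  have "cls H p \<in> carrier Cl" if "p \<in> T" for p
    using cls_in_carrier XH_frac_div T(2) that by blast
  then have X: "?X \<in> carrier Cl" by (intro Cl.finprod_closed Pi_I Cl.int_pow_closed)
  have "is_divisor (\<lambda>Q. if Q \<in> T then w Q else 0)"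
    by (rule is_divisor_subset[OF T]) (auto simp: dsupp_def)
  then have W: "?w \<in> carrier Cl" by (rule dclass_in_carrier)
  have "?X = \<one>\<^bsub>Cl\<^esub> \<longleftrightarrow> ?X \<otimes>\<^bsub>Cl\<^esub> ?w = ?w"
    using Cl.r_cancel_one[OF W X] by (rule sym)
  also have "\<dots> \<longleftrightarrow> dclass (\<lambda>Q. if Q \<in> T then u Q else 0) = ?w"
    by (simp only: finprod_cls_int_pow[OF T])
  finally show ?thesis .
qed

lemma int_dependent_iff:
  assumes T: "finite T" "T \<subseteq> XH H"
  shows "(\<exists>\<alpha>::'a set \<Rightarrow> int. (\<exists>p\<in>T. \<alpha> p \<noteq> 0) \<and> finprod Cl (\<lambda>p. cls H p [^]\<^bsub>Cl\<^esub> \<alpha> p) T = \<one>\<^bsub>Cl\<^esub>)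
    \<longleftrightarrow> int_dependent T"
proof -
  note prod_one_iff = finprod_cls_int_pow_eq_one_iff[OF T]
  show ?thesis
  proof
    assume "\<exists>\<alpha>::'a set \<Rightarrow> int. (\<exists>p\<in>T. \<alpha> p \<noteq> 0) \<and> finprod Cl (\<lambda>p. cls H p [^]\<^bsub>Cl\<^esub> \<alpha> p) T = \<one>\<^bsub>Cl\<^esub>"
    then obtain \<alpha> :: "'a set \<Rightarrow> int" and p where \<alpha>: "p \<in> T" "\<alpha> p \<noteq> 0"
      "finprod Cl (\<lambda>p. cls H p [^]\<^bsub>Cl\<^esub> \<alpha> p) T = \<one>\<^bsub>Cl\<^esub>" by blast
    define u where "u = (\<lambda>Q. if Q \<in> T then nat (\<alpha> Q) else 0)"
    define w where "w = (\<lambda>Q. if Q \<in> T then nat (- \<alpha> Q) else 0)"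
    have "int (nat (\<alpha> Q)) - int (nat (- \<alpha> Q)) = \<alpha> Q" for Q by simp
    then have "dclass u = dclass w"
      unfolding u_def w_def prod_one_iff[symmetric] using \<alpha>(3) by (simp only:)
    moreover have "u p \<noteq> w p" using \<alpha>(1,2) unfolding u_def w_def by auto
    moreover have "dsupp u \<subseteq> T" "dsupp w \<subseteq> T" unfolding u_def w_def dsupp_def by auto
    ultimately show "int_dependent T" unfolding int_dependent_def by blast
  next
    assume "int_dependent T"
    then obtain u w where uw: "dsupp u \<subseteq> T" "dsupp w \<subseteq> T" "u \<noteq> w" "dclass u = dclass w"
      unfolding int_dependent_def by blast
    obtain p where p: "u p \<noteq> w p" using uw(3) by (meson ext)
    then have "u p \<noteq> 0 \<or> w p \<noteq> 0" by auto
    then have "p \<in> T" using nonzero_at_dsupp[OF uw(1), of p] nonzero_at_dsupp[OF uw(2), of p] by blast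
    moreover have "int (u p) - int (w p) \<noteq> 0" using p by simp
    moreover have prod: "finprod Cl (\<lambda>p. cls H p [^]\<^bsub>Cl\<^esub> (int (u p) - int (w p))) T = \<one>\<^bsub>Cl\<^esub>"
      unfolding prod_one_iff restrict_dsupp[OF uw(1)] restrict_dsupp[OF uw(2)] by (rule uw(4))
    ultimately show "\<exists>\<alpha>::'a set \<Rightarrow> int. (\<exists>p\<in>T. \<alpha> p \<noteq> 0) \<and> finprod Cl (\<lambda>p. cls H p [^]\<^bsub>Cl\<^esub> \<alpha> p) T = \<one>\<^bsub>Cl\<^esub>"
      by (intro exI[of _ "\<lambda>p. int (u p) - int (w p)"] conjI bexI[of _ p])
  qed
qed

lemma nat_dependent_imp_int_dependent:
  assumes "nat_dependent T" shows "int_dependent T"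
proof -
  obtain e where "dsupp e \<subseteq> T" "e \<noteq> (\<lambda>_. 0)" "dclass e = dclass (\<lambda>_. 0)"
    using assms dclass_zero unfolding nat_dependent_def by auto
  then show ?thesis unfolding int_dependent_def by (intro exI[of _ e] exI[of _ "\<lambda>_. 0"]) auto
qed

lemma dclass_eq_iff_diff:
  assumes "is_divisor u" "is_divisor w"
  shows "dclass (\<lambda>Q. u Q - w Q) = dclass (\<lambda>Q. w Q - u Q) \<longleftrightarrow> dclass u = dclass w"
proof -
  define m where "m = (\<lambda>Q. min (u Q) (w Q))"
  have div: "is_divisor m" "is_divisor (\<lambda>Q. u Q - w Q)" "is_divisor (\<lambda>Q. w Q - u Q)"
    using is_divisor_le assms unfolding m_def by auto
  have "dclass (\<lambda>Q. (u Q - w Q) + m Q) = dclass (\<lambda>Q. u Q - w Q) \<otimes>\<^bsub>Cl\<^esub> dclass m"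
    by (rule dclass_add[OF div(2,1)])
  moreover have "dclass (\<lambda>Q. (w Q - u Q) + m Q) = dclass (\<lambda>Q. w Q - u Q) \<otimes>\<^bsub>Cl\<^esub> dclass m"
    by (rule dclass_add[OF div(3,1)])
  moreover have "(\<lambda>Q. (u Q - w Q) + m Q) = u" "(\<lambda>Q. (w Q - u Q) + m Q) = w"
    unfolding m_def by auto
  ultimately show ?thesis
    using Cl.right_cancel[OF dclass_in_carrier[OF div(1)] dclass_in_carrier[OF div(2)]
        dclass_in_carrier[OF div(3)]] by simp
qed

end

section \<open>Minimal supports\<close>

lemma dsupp_mono: "(\<And>Q. e Q \<le> f Q) \<Longrightarrow> dsupp e \<subseteq> dsupp f"
  unfolding dsupp_def by (auto intro: less_le_trans)

context krull
begin

definition minimal_supp :: "'a set \<Rightarrow> 'a set set \<Rightarrow> bool" where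
  "minimal_supp X S \<longleftrightarrow> (\<exists>b\<in>X. dsupp (divisor b) = S) \<and>
     (\<forall>b\<in>X. dsupp (divisor b) \<subseteq> S \<longrightarrow> dsupp (divisor b) = S)"

lemma minimal_supp_iff:
  assumes "X \<subseteq> H"
  shows "minimal_supp X S \<longleftrightarrow> S \<in> {supp H (pideal H b) | b. b \<in> X} \<and>
    (\<forall>b\<in>X. supp H (pideal H b) \<subseteq> S \<longrightarrow> supp H (pideal H b) = S)"
proof -
  have eq: "supp H (pideal H b) = dsupp (divisor b)" if "b \<in> X" for b
    using supp_pideal assms that by blast
  have "S \<in> {supp H (pideal H b) | b. b \<in> X} \<longleftrightarrow> (\<exists>b\<in>X. supp H (pideal H b) = S)" by blast
  also have "\<dots> \<longleftrightarrow> (\<exists>b\<in>X. dsupp (divisor b) = S)" by (intro bex_cong refl) (simp add: eq)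
  moreover have "(\<forall>b\<in>X. supp H (pideal H b) \<subseteq> S \<longrightarrow> supp H (pideal H b) = S)
      \<longleftrightarrow> (\<forall>b\<in>X. dsupp (divisor b) \<subseteq> S \<longrightarrow> dsupp (divisor b) = S)"
    by (intro ball_cong refl) (simp add: eq)
  ultimately show ?thesis unfolding minimal_supp_def by simp
qed

lemma irred_dvd_abs_irred_power:
  assumes a: "abs_irred H a" and x: "irred H x" and d: "d \<in> H" "nmul n a = x + d"
  shows "divisor x = divisor a"
proof -
  have xH: "x \<in> H" by (rule irred_mem[OF x])
  have aH: "a \<in> H" using a unfolding abs_irred_def irred_def by blast
  obtain y ys where y: "divisor y = divisor x" "\<forall>z\<in>set (y # ys). irred H z"
    "sum_list (y # ys) = nmul n a"
  proof (cases "d \<in> unitsH H")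
    case True
    then have "divisor d = (\<lambda>_. 0)" using unit_iff_divisor_eq_zero[OF d(1)] by blast
    then have "divisor (x + d) = divisor x" using divisor_add[OF xH d(1)] by simp
    then show ?thesis using that[of "x + d" "[]"] irred_add_unit[OF x True] d(2) by simp
  next
    case False
    obtain ys where "\<forall>z\<in>set ys. irred H z" "sum_list ys = d"
      using exists_irred_factorization[OF d(1) False] by blast
    then show ?thesis using that[of x ys] x d(2) by simp
  qed
  then have "associated H y a" using a unfolding abs_irred_def by (meson list.set_intros(1))
  then show ?thesis using associated_iff_divisor_eq[OF irred_mem aH] y by simp
qed

lemma minimal_supp_nonunit_if_abs_irred:
  assumes aH: "a \<in> H" and a: "abs_irred H a"
  shows "minimal_supp (H - unitsH H) (dsupp (divisor a))"
  unfolding minimal_supp_def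
proof (intro conjI ballI impI)
  show "\<exists>b\<in>H - unitsH H. dsupp (divisor b) = dsupp (divisor a)"
    using aH a unfolding abs_irred_def irred_def by blast
  fix b assume "b \<in> H - unitsH H" and sub: "dsupp (divisor b) \<subseteq> dsupp (divisor a)"
  then have b: "b \<in> H" "b \<notin> unitsH H" by auto
  obtain x where x: "irred H x" "\<And>Q. divisor x Q \<le> divisor b Q"
    using exists_irred_dvd[OF b] by blast
  define n where "n = sum (divisor b) (dsupp (divisor a))"
  have fin: "finite (dsupp (divisor a))" using is_divisor_divisor[OF aH] by (simp add: is_divisor_def)
  \<comment> \<open>some power of \<open>a\<close> is divisible by \<open>b\<close>, hence by \<open>x\<close>\<close>
  have "divisor b Q \<le> n * divisor a Q" for Q
  proof (cases "Q \<in> dsupp (divisor a)")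
    case True
    then have "divisor b Q \<le> n" unfolding n_def using fin by (intro member_le_sum) auto
    moreover have "1 \<le> divisor a Q" using True unfolding dsupp_def by simp
    ultimately show ?thesis using mult_le_mono[of "divisor b Q" n 1 "divisor a Q"] by simp
  next
    case False
    then show ?thesis using sub unfolding dsupp_def by auto
  qed
  then have "\<forall>Q. divisor x Q \<le> divisor (nmul n a) Q"
    using x(2) divisor_nmul[OF aH] order_trans by fastforce
  then obtain d where "d \<in> H" "nmul n a = x + d"
    using dvd_iff_divisor_le[OF irred_mem[OF x(1)] nmul_mem[OF aH]] by blast
  then have "divisor x = divisor a" by (rule irred_dvd_abs_irred_power[OF a x(1)])
  then show "dsupp (divisor b) = dsupp (divisor a)"
    using dsupp_mono[of "divisor x" "divisor b"] x(2) sub by auto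
qed

lemma minimal_supp_irred_if_nonunit:
  assumes "minimal_supp (H - unitsH H) S"
  shows "minimal_supp {b. irred H b} S"
proof -
  have min: "dsupp (divisor b) = S" if "b \<in> H" "b \<notin> unitsH H" "dsupp (divisor b) \<subseteq> S" for b
    using assms that unfolding minimal_supp_def by blast
  obtain b where b: "b \<in> H" "b \<notin> unitsH H" "dsupp (divisor b) = S"
    using assms unfolding minimal_supp_def by blast
  obtain u where u: "irred H u" "\<And>Q. divisor u Q \<le> divisor b Q"
    using exists_irred_dvd[OF b(1,2)] by blast
  have "dsupp (divisor u) = S"
    using min[OF irred_mem[OF u(1)] irred_not_unit[OF u(1)]] dsupp_mono[of "divisor u"] u(2) b(3)
    by blast
  then show ?thesis
    unfolding minimal_supp_def using u(1) irred_mem irred_not_unit min by blast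
qed

lemma minimal_nat_dependent_if_minimal_supp_irred:
  assumes "minimal_supp {b. irred H b} S"
  shows "nat_dependent S \<and> (\<forall>T. T \<subset> S \<longrightarrow> \<not> nat_dependent T)"
proof
  obtain u where u: "irred H u" "dsupp (divisor u) = S"
    using assms unfolding minimal_supp_def by blast
  have S: "finite S" "S \<subseteq> XH H" using is_divisor_divisor[OF irred_mem[OF u(1)]] u(2)
    unfolding is_divisor_def by auto
  show "nat_dependent S"
    unfolding nat_dependent_def
    using u irred_divisor_nonzero dclass_divisor[OF irred_mem[OF u(1)]] by blast
  show "\<forall>T. T \<subset> S \<longrightarrow> \<not> nat_dependent T"
  proof (intro allI impI notI)
    fix T assume T: "T \<subset> S" and "nat_dependent T"
    then obtain e where e: "dsupp e \<subseteq> T" "e \<noteq> (\<lambda>_. 0)" "dclass e = \<one>\<^bsub>Cl\<^esub>"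
      unfolding nat_dependent_def by blast
    have "is_divisor e" using is_divisor_subset[OF S] e(1) T by blast
    then obtain c where c: "c \<in> H" "divisor c = e" using dclass_eq_one_iff e(3) by blast
    then have "c \<notin> unitsH H" using unit_iff_divisor_eq_zero e(2) by simp
    then obtain w where w: "irred H w" "\<And>Q. divisor w Q \<le> divisor c Q"
      using exists_irred_dvd[OF c(1)] by blast
    then have "dsupp (divisor w) \<subseteq> T" using dsupp_mono[of "divisor w" "divisor c"] c(2) e(1) by blast
    moreover have "dsupp (divisor w) \<subseteq> S \<Longrightarrow> dsupp (divisor w) = S"
      using assms w(1) unfolding minimal_supp_def by blast
    ultimately show False using T by blast
  qed
qed

end

section \<open>Minimal relations\<close>

lemma exists_max_ratio:
  fixes b a :: "'b \<Rightarrow> nat"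
  assumes "finite T" "T \<noteq> {}" "\<forall>p\<in>T. 0 < a p"
  shows "\<exists>p0\<in>T. \<forall>p\<in>T. b p * a p0 \<le> b p0 * a p"
  using assms
proof (induction T rule: finite_ne_induct)
  case (singleton x)
  then show ?case by simp
next
  case (insert x F)
  then obtain p0 where p0: "p0 \<in> F" "\<forall>p\<in>F. b p * a p0 \<le> b p0 * a p" by auto
  show ?case
  proof (cases "b p0 * a x \<le> b x * a p0")
    case True
    have "b p * a x \<le> b x * a p" if p: "p \<in> F" for p
    proof -
      have "(b p * a x) * a p0 = (b p * a p0) * a x" by (simp add: ac_simps)
      also have "\<dots> \<le> (b p0 * a p) * a x" using p0(2) p by (intro mult_le_mono1) auto
      also have "\<dots> = (b p0 * a x) * a p" by (simp add: ac_simps)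
      also have "\<dots> \<le> (b x * a p0) * a p" using True by (intro mult_le_mono1)
      also have "\<dots> = (b x * a p) * a p0" by (simp add: ac_simps)
      finally show ?thesis using insert.prems p0(1) by simp
    qed
    then show ?thesis by auto
  next
    case False
    then show ?thesis using p0 by (intro bexI[of _ p0]) auto
  qed
qed

locale krull_prime_set = krull +
  fixes S :: "'a set set"
  assumes finite_S: "finite S" and S_subset_XH: "S \<subseteq> XH H"
begin

lemma is_divisor_dsupp_subset: "dsupp e \<subseteq> S \<Longrightarrow> is_divisor e"
  by (rule is_divisor_subset[OF finite_S S_subset_XH])

lemma minimal_nat_dependent_iff:
  "((\<exists>\<alpha>::'a set \<Rightarrow> nat. (\<exists>p\<in>S. \<alpha> p \<noteq> 0) \<and> finprod Cl (\<lambda>p. cls H p [^]\<^bsub>Cl\<^esub> \<alpha> p) S = \<one>\<^bsub>Cl\<^esub>) \<and>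
    (\<forall>T. T \<subset> S \<longrightarrow> \<not> (\<exists>\<alpha>::'a set \<Rightarrow> nat. (\<exists>p\<in>T. \<alpha> p \<noteq> 0) \<and>
       finprod Cl (\<lambda>p. cls H p [^]\<^bsub>Cl\<^esub> \<alpha> p) T = \<one>\<^bsub>Cl\<^esub>)))
   \<longleftrightarrow> nat_dependent S \<and> (\<forall>T. T \<subset> S \<longrightarrow> \<not> nat_dependent T)"
proof -
  have T: "finite T" "T \<subseteq> XH H" if "T \<subseteq> S" for T
    using that finite_subset[OF _ finite_S] S_subset_XH by auto
  show ?thesis
    unfolding nat_dependent_iff[OF T[OF order_refl]]
    by (intro conj_cong refl all_cong arg_cong[where f = Not] nat_dependent_iff T)
      (erule psubset_imp_subset)+
qed

lemma minimal_int_dependent_iff: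
  "((\<exists>\<alpha>::'a set \<Rightarrow> nat. (\<exists>p\<in>S. \<alpha> p \<noteq> 0) \<and> finprod Cl (\<lambda>p. cls H p [^]\<^bsub>Cl\<^esub> \<alpha> p) S = \<one>\<^bsub>Cl\<^esub>) \<and>
    (\<forall>T. T \<subset> S \<longrightarrow> \<not> (\<exists>\<alpha>::'a set \<Rightarrow> int. (\<exists>p\<in>T. \<alpha> p \<noteq> 0) \<and>
       finprod Cl (\<lambda>p. cls H p [^]\<^bsub>Cl\<^esub> \<alpha> p) T = \<one>\<^bsub>Cl\<^esub>)))
   \<longleftrightarrow> nat_dependent S \<and> (\<forall>T. T \<subset> S \<longrightarrow> \<not> int_dependent T)"
proof -
  have T: "finite T" "T \<subseteq> XH H" if "T \<subseteq> S" for T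
    using that finite_subset[OF _ finite_S] S_subset_XH by auto
  show ?thesis
    unfolding nat_dependent_iff[OF T[OF order_refl]]
    by (intro conj_cong refl all_cong arg_cong[where f = Not] int_dependent_iff T)
      (erule psubset_imp_subset)+
qed

lemma relation_dsupp_eq:
  assumes "\<forall>T. T \<subset> S \<longrightarrow> \<not> nat_dependent T"
    and "dsupp e \<subseteq> S" "e \<noteq> (\<lambda>_. 0)" "dclass e = \<one>\<^bsub>Cl\<^esub>"
  shows "dsupp e = S"
  using assms unfolding nat_dependent_def by blast

lemma dclass_combination_eq_one:
  assumes "dsupp \<alpha> \<subseteq> S" "dclass \<alpha> = \<one>\<^bsub>Cl\<^esub>" "dsupp bp \<subseteq> S" "dsupp bm \<subseteq> S"
    "dclass bp = dclass bm" "dsupp \<gamma> \<subseteq> S" "\<And>Q. \<gamma> Q + k * bm Q = c * \<alpha> Q + k * bp Q"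
  shows "dclass \<gamma> = \<one>\<^bsub>Cl\<^esub>"
proof -
  have div: "is_divisor \<gamma>" "is_divisor (\<lambda>Q. k * bm Q)" "is_divisor (\<lambda>Q. c * \<alpha> Q)"
    "is_divisor (\<lambda>Q. k * bp Q)" "is_divisor bm"
    using assms(1,3,4,6) by (auto intro!: is_divisor_dsupp_subset simp: dsupp_def)
  have "dclass \<gamma> \<otimes>\<^bsub>Cl\<^esub> dclass (\<lambda>Q. k * bm Q) = dclass (\<lambda>Q. c * \<alpha> Q) \<otimes>\<^bsub>Cl\<^esub> dclass (\<lambda>Q. k * bp Q)"
    using dclass_add[OF div(1,2)] dclass_add[OF div(3,4)] assms(7) by simp
  also have "\<dots> = dclass (\<lambda>Q. k * bm Q)"
    using dclass_mult is_divisor_dsupp_subset assms(1-5) dclass_in_carrier[OF div(5)] by simp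
  finally show ?thesis
    using Cl.r_cancel_one[OF dclass_in_carrier[OF div(2)] dclass_in_carrier[OF div(1)]] by blast
qed

text \<open>Given a relation \<open>\<alpha>\<close> with support \<open>S\<close> and divisors \<open>\<beta>\<^sup>+, \<beta>\<^sup>-\<close> with disjoint supports and
  equal classes, let \<open>p\<^sub>0\<close> maximise \<open>\<beta>\<^sup>-/\<alpha>\<close>. Then \<open>c\<alpha> + k(\<beta>\<^sup>+ - \<beta>\<^sup>-)\<close> with \<open>k = \<alpha>(p\<^sub>0)\<close> and
  \<open>c = \<beta>\<^sup>-(p\<^sub>0)\<close> is a relation over \<open>\<nat>\<close> vanishing at \<open>p\<^sub>0\<close> and positive wherever \<open>\<beta>\<^sup>-\<close> vanishes on \<open>S\<close>.\<close>

lemma exists_relation_avoiding: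
  assumes \<alpha>: "dsupp \<alpha> = S" "dclass \<alpha> = \<one>\<^bsub>Cl\<^esub>"
    and \<beta>: "dsupp bp \<subseteq> S" "dsupp bm \<subseteq> S" "dclass bp = dclass bm" "\<And>Q. bp Q = 0 \<or> bm Q = 0"
      "bm \<noteq> (\<lambda>_. 0)"
    and q: "q \<in> S" "bm q = 0"
  obtains p0 \<gamma> where "p0 \<in> S" "dsupp \<gamma> \<subseteq> S - {p0}" "\<gamma> \<noteq> (\<lambda>_. 0)" "dclass \<gamma> = \<one>\<^bsub>Cl\<^esub>"
proof -
  have \<alpha>_pos: "0 < \<alpha> p" if "p \<in> S" for p using \<alpha>(1) that unfolding dsupp_def by blast
  have "dsupp bm \<noteq> {}" using \<beta>(5) unfolding dsupp_def by (auto simp: fun_eq_iff)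
  moreover have "finite (dsupp bm)" using \<beta>(2) finite_S by (rule finite_subset)
  ultimately obtain p0 where p0: "p0 \<in> dsupp bm" "\<And>p. p \<in> dsupp bm \<Longrightarrow> bm p * \<alpha> p0 \<le> bm p0 * \<alpha> p"
    using exists_max_ratio[of "dsupp bm" \<alpha> bm] \<alpha>_pos \<beta>(2) by blast
  have p0S: "p0 \<in> S" using p0(1) \<beta>(2) by blast
  define c where "c = bm p0"
  define k where "k = \<alpha> p0"
  have ineq: "k * bm Q \<le> c * \<alpha> Q" for Q
    using p0(2)[of Q] unfolding c_def k_def dsupp_def by (cases "0 < bm Q") (auto simp: mult.commute)
  define \<gamma> where "\<gamma> = (\<lambda>Q. c * \<alpha> Q + k * bp Q - k * bm Q)"
  have sum_eq: "\<gamma> Q + k * bm Q = c * \<alpha> Q + k * bp Q" for Q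
  proof -
    have "k * bm Q \<le> c * \<alpha> Q + k * bp Q" using ineq[of Q] by linarith
    then show "\<gamma> Q + k * bm Q = c * \<alpha> Q + k * bp Q" unfolding \<gamma>_def by simp
  qed
  have "bp p0 = 0" using \<beta>(4)[of p0] p0(1) unfolding dsupp_def by auto
  have \<gamma>_supp: "dsupp \<gamma> \<subseteq> S - {p0}"
  proof
    fix Q assume "Q \<in> dsupp \<gamma>"
    then have pos: "0 < c * \<alpha> Q + k * bp Q - k * bm Q" unfolding dsupp_def \<gamma>_def by simp
    then have "\<alpha> Q \<noteq> 0 \<or> bp Q \<noteq> 0" by (metis diff_is_0_eq mult_0_right add_0 le0 less_irrefl)
    then have "Q \<in> S" using \<alpha>(1) \<beta>(1) unfolding dsupp_def by auto
    moreover have "Q \<noteq> p0" using pos \<open>bp p0 = 0\<close> by (auto simp: c_def k_def mult.commute)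
    ultimately show "Q \<in> S - {p0}" by blast
  qed
  have "dclass \<gamma> = \<one>\<^bsub>Cl\<^esub>"
    by (rule dclass_combination_eq_one[OF _ \<alpha>(2) \<beta>(1-3)]) (use \<alpha>(1) \<gamma>_supp sum_eq in auto)
  moreover have "0 < \<gamma> q"
    using \<alpha>_pos[OF q(1)] q(2) p0(1) unfolding \<gamma>_def c_def dsupp_def by simp
  then have "\<gamma> \<noteq> (\<lambda>_. 0)" by (auto simp: fun_eq_iff)
  ultimately show ?thesis using that p0S \<gamma>_supp by blast
qed

lemma int_independent_if_minimal_nat_dependent:
  assumes dep: "nat_dependent S" and min: "\<forall>T. T \<subset> S \<longrightarrow> \<not> nat_dependent T"
  shows "\<forall>T. T \<subset> S \<longrightarrow> \<not> int_dependent T"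
proof (intro allI impI notI)
  fix T assume T: "T \<subset> S" and "int_dependent T"
  then obtain u w where uw: "dsupp u \<subseteq> T" "dsupp w \<subseteq> T" "u \<noteq> w" "dclass u = dclass w"
    unfolding int_dependent_def by blast
  obtain \<alpha> where \<alpha>: "dsupp \<alpha> \<subseteq> S" "\<alpha> \<noteq> (\<lambda>_. 0)" "dclass \<alpha> = \<one>\<^bsub>Cl\<^esub>"
    using dep unfolding nat_dependent_def by blast
  have \<alpha>S: "dsupp \<alpha> = S" by (rule relation_dsupp_eq[OF min \<alpha>])
  define bp where "bp = (\<lambda>Q. u Q - w Q)"
  define bm where "bm = (\<lambda>Q. w Q - u Q)"
  have \<beta>: "dsupp bp \<subseteq> T" "dsupp bm \<subseteq> T" "\<And>Q. bp Q = 0 \<or> bm Q = 0"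
    using uw(1,2) unfolding bp_def bm_def dsupp_def by auto
  have "dclass bp = dclass bm"
    unfolding bp_def bm_def using dclass_eq_iff_diff uw(1,2,4) T is_divisor_dsupp_subset by blast
  obtain q where q: "q \<in> S" "q \<notin> T" using T by blast
  show False
  proof (cases "bm = (\<lambda>_. 0)")
    case True
    then have "bp \<noteq> (\<lambda>_. 0)"
      using uw(3) unfolding bp_def bm_def by (auto simp: fun_eq_iff intro: le_antisym)
    then have "nat_dependent T"
      unfolding nat_dependent_def using \<beta>(1) \<open>dclass bp = dclass bm\<close> True dclass_zero by auto
    then show False using min T by blast
  next
    case False
    obtain p0 \<gamma> where "p0 \<in> S" "dsupp \<gamma> \<subseteq> S - {p0}" "\<gamma> \<noteq> (\<lambda>_. 0)" "dclass \<gamma> = \<one>\<^bsub>Cl\<^esub>"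
      by (rule exists_relation_avoiding[OF \<alpha>S \<alpha>(3) _ _ \<open>dclass bp = dclass bm\<close> \<beta>(3) False q(1)])
        (use \<beta>(1,2) T q(2) in \<open>auto simp: dsupp_def\<close>)
    then have "nat_dependent (S - {p0})" unfolding nat_dependent_def by blast
    then show False using min \<open>p0 \<in> S\<close> by blast
  qed
qed

lemma relations_proportional:
  assumes indep: "\<forall>T. T \<subset> S \<longrightarrow> \<not> int_dependent T"
    and e: "dsupp e \<subseteq> S" "dclass e = \<one>\<^bsub>Cl\<^esub>" and f: "dsupp f \<subseteq> S" "dclass f = \<one>\<^bsub>Cl\<^esub>"
    and p: "p \<in> S"
  shows "f p * e Q = e p * f Q"
proof -
  define x where "x = (\<lambda>Q. f p * e Q)"
  define y where "y = (\<lambda>Q. e p * f Q)"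
  have supp: "dsupp x \<subseteq> S" "dsupp y \<subseteq> S"
    using e(1) f(1) unfolding x_def y_def dsupp_def by auto
  then have div: "is_divisor x" "is_divisor y" using is_divisor_dsupp_subset by auto
  have "dclass x = \<one>\<^bsub>Cl\<^esub>" "dclass y = \<one>\<^bsub>Cl\<^esub>"
    unfolding x_def y_def using dclass_mult is_divisor_dsupp_subset e f by simp_all
  then have eq: "dclass (\<lambda>Q. x Q - y Q) = dclass (\<lambda>Q. y Q - x Q)"
    using dclass_eq_iff_diff[OF div] by simp
  have xy_p: "x p = y p" unfolding x_def y_def by (simp add: mult.commute)
  have diff_supp: "dsupp (\<lambda>Q. u Q - v Q) \<subseteq> S - {p}"
    if "dsupp u \<subseteq> S" "u p = v p" for u v :: "'a set \<Rightarrow> nat"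
    using that unfolding dsupp_def by auto
  have "\<not> int_dependent (S - {p})" using indep p by blast
  then have "(\<lambda>Q. x Q - y Q) = (\<lambda>Q. y Q - x Q)"
    using diff_supp[of x y, OF supp(1) xy_p] diff_supp[of y x, OF supp(2) xy_p[symmetric]] eq
    unfolding int_dependent_def by blast
  then have "x Q - y Q = y Q - x Q" by (rule fun_cong)
  then show ?thesis unfolding x_def y_def by linarith
qed

lemma relation_multiple_of_minimal:
  assumes indep: "\<forall>T. T \<subset> S \<longrightarrow> \<not> int_dependent T"
    and \<gamma>: "dsupp \<gamma> = S" "dclass \<gamma> = \<one>\<^bsub>Cl\<^esub>" and p0: "p0 \<in> S"
    and min: "\<And>e. dsupp e \<subseteq> S \<Longrightarrow> e \<noteq> (\<lambda>_. 0) \<Longrightarrow> dclass e = \<one>\<^bsub>Cl\<^esub> \<Longrightarrow> \<gamma> p0 \<le> e p0"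
    and e: "dsupp e \<subseteq> S" "dclass e = \<one>\<^bsub>Cl\<^esub>"
  shows "\<exists>q. e = (\<lambda>Q. q * \<gamma> Q)"
proof -
  have pos: "0 < \<gamma> p0" using \<gamma>(1) p0 unfolding dsupp_def by blast
  define q where "q = e p0 div \<gamma> p0"
  have le: "q * \<gamma> Q \<le> e Q" for Q
  proof -
    have "\<gamma> p0 * (q * \<gamma> Q) = (q * \<gamma> p0) * \<gamma> Q" by (simp add: ac_simps)
    also have "\<dots> \<le> e p0 * \<gamma> Q" unfolding q_def by (intro mult_le_mono1 div_times_less_eq_dividend)
    also have "\<dots> = \<gamma> p0 * e Q"
      by (rule relations_proportional[OF indep _ \<gamma>(2) e p0]) (simp add: \<gamma>(1))
    finally show ?thesis using pos by simp
  qed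
  \<comment> \<open>the remainder \<open>e - q\<gamma>\<close> is a relation smaller than \<open>\<gamma>\<close> at \<open>p\<^sub>0\<close>, hence zero\<close>
  define r where "r = (\<lambda>Q. e Q - q * \<gamma> Q)"
  have e_eq: "e = (\<lambda>Q. q * \<gamma> Q + r Q)" unfolding r_def using le by (simp add: fun_eq_iff)
  have r_supp: "dsupp r \<subseteq> S" using e(1) unfolding r_def dsupp_def by auto
  have \<gamma>_div: "is_divisor \<gamma>" and r_div: "is_divisor r"
    using \<gamma>(1) r_supp is_divisor_dsupp_subset by auto
  have q\<gamma>_div: "is_divisor (\<lambda>Q. q * \<gamma> Q)" using \<gamma>(1)
    by (intro is_divisor_dsupp_subset) (auto simp: dsupp_def)
  have "dclass (\<lambda>Q. q * \<gamma> Q) = \<one>\<^bsub>Cl\<^esub>" using dclass_mult[OF \<gamma>_div] \<gamma>(2) by simp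
  then have "dclass e = dclass r"
    using dclass_add[OF q\<gamma>_div r_div] e_eq dclass_in_carrier[OF r_div] by simp
  then have r_rel: "dclass r = \<one>\<^bsub>Cl\<^esub>" using e(2) by simp
  have "r p0 = e p0 mod \<gamma> p0" unfolding r_def q_def by (simp add: minus_div_mult_eq_mod)
  then have "r p0 < \<gamma> p0" using pos by simp
  then have "r = (\<lambda>_. 0)" using min[OF r_supp _ r_rel] by (meson leD)
  then show ?thesis using e_eq by auto
qed

definition generates_relations :: "('a set \<Rightarrow> nat) \<Rightarrow> bool" where
  "generates_relations \<gamma> \<longleftrightarrow> dsupp \<gamma> = S \<and> dclass \<gamma> = \<one>\<^bsub>Cl\<^esub> \<and>
     (\<forall>e. dsupp e \<subseteq> S \<longrightarrow> dclass e = \<one>\<^bsub>Cl\<^esub> \<longrightarrow> (\<exists>q. e = (\<lambda>Q. q * \<gamma> Q)))"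

lemma exists_relation_generator:
  assumes S: "S \<noteq> {}" and dep: "nat_dependent S" and indep: "\<forall>T. T \<subset> S \<longrightarrow> \<not> int_dependent T"
  obtains \<gamma> where "generates_relations \<gamma>"
proof -
  obtain p0 where p0: "p0 \<in> S" using S by blast
  let ?R = "\<lambda>k. \<exists>e. dsupp e \<subseteq> S \<and> e \<noteq> (\<lambda>_. 0) \<and> dclass e = \<one>\<^bsub>Cl\<^esub> \<and> e p0 = k"
  obtain e where "dsupp e \<subseteq> S" "e \<noteq> (\<lambda>_. 0)" "dclass e = \<one>\<^bsub>Cl\<^esub>"
    using dep unfolding nat_dependent_def by blast
  then have "?R (e p0)" by blast
  then obtain \<gamma> where \<gamma>: "dsupp \<gamma> \<subseteq> S" "\<gamma> \<noteq> (\<lambda>_. 0)" "dclass \<gamma> = \<one>\<^bsub>Cl\<^esub>"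
    "\<gamma> p0 = (LEAST k. ?R k)"
    using LeastI_ex[of ?R] by blast
  have min: "\<gamma> p0 \<le> f p0" if "dsupp f \<subseteq> S" "f \<noteq> (\<lambda>_. 0)" "dclass f = \<one>\<^bsub>Cl\<^esub>" for f
    unfolding \<gamma>(4) using that by (intro Least_le) blast
  have "\<forall>T. T \<subset> S \<longrightarrow> \<not> nat_dependent T" using indep nat_dependent_imp_int_dependent by blast
  then have \<gamma>S: "dsupp \<gamma> = S" by (rule relation_dsupp_eq[OF _ \<gamma>(1-3)])
  have "\<exists>q. e = (\<lambda>Q. q * \<gamma> Q)" if "dsupp e \<subseteq> S" "dclass e = \<one>\<^bsub>Cl\<^esub>" for e
    by (rule relation_multiple_of_minimal[OF indep \<gamma>S \<gamma>(3) p0]) (use min that in auto)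
  then have "generates_relations \<gamma>"
    unfolding generates_relations_def using \<gamma>S \<gamma>(3) by blast
  then show ?thesis by (rule that)
qed

lemma divisor_eq_if_generates_relations:
  assumes \<gamma>: "generates_relations \<gamma>" and b: "irred H b" "dsupp (divisor b) \<subseteq> S"
  shows "divisor b = \<gamma>"
proof -
  have bH: "b \<in> H" by (rule irred_mem[OF b(1)])
  obtain q where q: "divisor b = (\<lambda>Q. q * \<gamma> Q)"
    using \<gamma> b(2) dclass_divisor[OF bH] unfolding generates_relations_def by blast
  have "q \<noteq> 0" using q irred_divisor_nonzero[OF b(1)] by auto
  moreover have "\<not> 2 \<le> q"
  proof
    assume q2: "2 \<le> q"
    obtain c where c: "c \<in> H" "divisor c = \<gamma>"
      using \<gamma> dclass_eq_one_iff is_divisor_dsupp_subset unfolding generates_relations_def by auto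
    have "\<forall>Q. divisor c Q \<le> divisor b Q" using c(2) q q2 by simp
    then obtain d where d: "d \<in> H" "b = c + d" using dvd_iff_divisor_le[OF c(1) bH] by blast
    have "\<gamma> \<noteq> (\<lambda>_. 0)" using q irred_divisor_nonzero[OF b(1)] by auto
    then have "c \<notin> unitsH H" using unit_iff_divisor_eq_zero[OF c(1)] c(2) by simp
    moreover have "divisor d = (\<lambda>Q. (q - 1) * \<gamma> Q)"
    proof
      fix Q
      have "\<gamma> Q + divisor d Q = q * \<gamma> Q"
        using divisor_add[OF c(1) d(1)] d(2) c(2) q by (simp add: fun_eq_iff)
      then show "divisor d Q = (q - 1) * \<gamma> Q" by (simp add: diff_mult_distrib; linarith)
    qed
    then have "d \<notin> unitsH H"
      using unit_iff_divisor_eq_zero[OF d(1)] \<open>\<gamma> \<noteq> (\<lambda>_. 0)\<close> q2 by (auto simp: fun_eq_iff)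
    ultimately show False using b(1) c(1) d unfolding irred_def by blast
  qed
  ultimately have "q = 1" by simp
  then show ?thesis using q by simp
qed

lemma irred_if_generates_relations:
  assumes S: "S \<noteq> {}" and \<gamma>: "generates_relations \<gamma>" and a: "a \<in> H" "divisor a = \<gamma>"
  shows "irred H a"
  unfolding irred_def
proof (intro conjI ballI impI a(1))
  have \<gamma>S: "dsupp \<gamma> = S" and \<gamma>_gen: "\<And>e. dsupp e \<subseteq> S \<Longrightarrow> dclass e = \<one>\<^bsub>Cl\<^esub> \<Longrightarrow> \<exists>q. e = (\<lambda>Q. q * \<gamma> Q)"
    using \<gamma> unfolding generates_relations_def by blast+
  obtain p0 where "p0 \<in> S" using S by blast
  then have pos: "0 < \<gamma> p0" using \<gamma>S unfolding dsupp_def by blast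
  then show "a \<notin> unitsH H" using unit_iff_divisor_eq_zero[OF a(1)] a(2) by auto
  fix y z assume yz: "y \<in> H" "z \<in> H" "a = y + z"
  have sum: "\<gamma> = (\<lambda>Q. divisor y Q + divisor z Q)" using divisor_add[OF yz(1,2)] yz(3) a(2) by simp
  then have "dsupp (divisor y) \<subseteq> S" "dsupp (divisor z) \<subseteq> S"
    using \<gamma>S dsupp_mono[of _ \<gamma>] by (auto simp: fun_eq_iff)
  then obtain q1 q2 where q: "divisor y = (\<lambda>Q. q1 * \<gamma> Q)" "divisor z = (\<lambda>Q. q2 * \<gamma> Q)"
    using \<gamma>_gen dclass_divisor yz(1,2) by metis
  then have "\<gamma> p0 = (q1 + q2) * \<gamma> p0" using sum by (metis add_mult_distrib)
  then have "q1 + q2 = 1" using pos by simp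
  then have "q1 = 0 \<or> q2 = 0" by arith
  then show "y \<in> unitsH H \<or> z \<in> unitsH H" using q unit_iff_divisor_eq_zero yz(1,2) by auto
qed

lemma abs_irred_if_generates_relations:
  assumes S: "S \<noteq> {}" and \<gamma>: "generates_relations \<gamma>" and a: "a \<in> H" "divisor a = \<gamma>"
  shows "abs_irred H a"
  unfolding abs_irred_def
proof (intro conjI irred_if_generates_relations[OF assms] allI impI)
  have \<gamma>S: "dsupp \<gamma> = S" using \<gamma> unfolding generates_relations_def by blast
  obtain p0 where "p0 \<in> S" using S by blast
  then have pos: "0 < \<gamma> p0" using \<gamma>S unfolding dsupp_def by blast
  fix n xs assume xs: "(\<forall>x\<in>set xs. irred H x) \<and> sum_list xs = nmul n a"
  have xH: "\<forall>x\<in>set xs. x \<in> H" using xs irred_mem by blast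
  have sum: "divisor (nmul n a) = (\<lambda>Q. \<Sum>x\<leftarrow>xs. divisor x Q)"
    using divisor_sum_list[OF xH] xs by simp
  have x_\<gamma>: "divisor x = \<gamma>" if x: "x \<in> set xs" for x
  proof (rule divisor_eq_if_generates_relations[OF \<gamma>])
    show "irred H x" using xs x by blast
    have "divisor x Q \<le> divisor (nmul n a) Q" for Q
      unfolding sum using x by (induction xs) auto
    then have "dsupp (divisor x) \<subseteq> dsupp (divisor (nmul n a))" by (rule dsupp_mono)
    also have "\<dots> \<subseteq> S" unfolding divisor_nmul[OF a(1)] a(2) \<gamma>S[symmetric] dsupp_def by auto
    finally show "dsupp (divisor x) \<subseteq> S" .
  qed
  then have "(\<Sum>x\<leftarrow>xs. divisor x p0) = length xs * \<gamma> p0" by (induction xs) auto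
  moreover have "divisor (nmul n a) p0 = n * \<gamma> p0" using divisor_nmul[OF a(1)] a(2) by simp
  ultimately show "length xs = n" using sum pos by simp
  show "\<forall>x\<in>set xs. associated H x a"
    using x_\<gamma> associated_iff_divisor_eq xH a by auto
qed

lemma exists_abs_irred_if_int_independent:
  assumes "S \<noteq> {}" "nat_dependent S" "\<forall>T. T \<subset> S \<longrightarrow> \<not> int_dependent T"
  shows "\<exists>a\<in>H. abs_irred H a \<and> dsupp (divisor a) = S"
proof -
  obtain \<gamma> where \<gamma>: "generates_relations \<gamma>" using exists_relation_generator assms by blast
  then have "dsupp \<gamma> = S" "dclass \<gamma> = \<one>\<^bsub>Cl\<^esub>" unfolding generates_relations_def by blast+
  then obtain a where "a \<in> H" "divisor a = \<gamma>"
    using dclass_eq_one_iff is_divisor_dsupp_subset by blast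
  then show ?thesis using abs_irred_if_generates_relations[OF assms(1) \<gamma>] \<open>dsupp \<gamma> = S\<close> by blast
qed

lemma associated_if_int_independent:
  assumes "S \<noteq> {}" "nat_dependent S" "\<forall>T. T \<subset> S \<longrightarrow> \<not> int_dependent T"
    and a: "irred H a" "dsupp (divisor a) = S" and b: "irred H b" "dsupp (divisor b) = S"
  shows "associated H a b"
proof -
  obtain \<gamma> where \<gamma>: "generates_relations \<gamma>" using exists_relation_generator assms(1-3) by blast
  have "divisor a = \<gamma>" "divisor b = \<gamma>"
    using divisor_eq_if_generates_relations[OF \<gamma>] a b by blast+
  then show ?thesis using associated_iff_divisor_eq irred_mem a(1) b(1) by simp
qed

end

theorem mainTheorem11:
  fixes H :: "'a::ab_group_add set" and S :: "'a set set"
  assumes "krull_monoid H"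
    and "finite S" and "S \<noteq> {}" and "S \<subseteq> XH H"
  defines "G \<equiv> class_group H"
  defines "A \<equiv> (\<exists>a\<in>H. abs_irred H a \<and> supp H (pideal H a) = S)"
  defines "B \<equiv> (S \<in> {supp H (pideal H b) | b. b \<in> H - unitsH H} \<and>
                 (\<forall>b\<in>H - unitsH H. supp H (pideal H b) \<subseteq> S \<longrightarrow> supp H (pideal H b) = S))"
  defines "C \<equiv> (S \<in> {supp H (pideal H b) | b. irred H b} \<and>
                 (\<forall>b. irred H b \<longrightarrow> supp H (pideal H b) \<subseteq> S \<longrightarrow> supp H (pideal H b) = S))"
  defines "D \<equiv> ((\<exists>\<alpha>::'a set \<Rightarrow> nat. (\<exists>p\<in>S. \<alpha> p \<noteq> 0) \<and>
                    finprod G (\<lambda>p. cls H p [^]\<^bsub>G\<^esub> \<alpha> p) S = \<one>\<^bsub>G\<^esub>) \<and>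
                (\<forall>T. T \<subset> S \<longrightarrow> \<not> (\<exists>\<alpha>::'a set \<Rightarrow> nat. (\<exists>p\<in>T. \<alpha> p \<noteq> 0) \<and>
                    finprod G (\<lambda>p. cls H p [^]\<^bsub>G\<^esub> \<alpha> p) T = \<one>\<^bsub>G\<^esub>)))"
  defines "E \<equiv> ((\<exists>\<alpha>::'a set \<Rightarrow> nat. (\<exists>p\<in>S. \<alpha> p \<noteq> 0) \<and>
                    finprod G (\<lambda>p. cls H p [^]\<^bsub>G\<^esub> \<alpha> p) S = \<one>\<^bsub>G\<^esub>) \<and>
                (\<forall>T. T \<subset> S \<longrightarrow> \<not> (\<exists>\<alpha>::'a set \<Rightarrow> int. (\<exists>p\<in>T. \<alpha> p \<noteq> 0) \<and>
                    finprod G (\<lambda>p. cls H p [^]\<^bsub>G\<^esub> \<alpha> p) T = \<one>\<^bsub>G\<^esub>)))"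
  shows "(A \<longleftrightarrow> B) \<and> (A \<longleftrightarrow> C) \<and> (A \<longleftrightarrow> D) \<and> (A \<longleftrightarrow> E) \<and>
         (A \<longrightarrow> (\<forall>a\<in>H. \<forall>b\<in>H. abs_irred H a \<and> supp H (pideal H a) = S \<and>
                  abs_irred H b \<and> supp H (pideal H b) = S \<longrightarrow> associated H a b))"
proof -
  interpret krull_prime_set H S
    using assms(1,2,4) unfolding krull_monoid_def by unfold_locales auto
  have A: "A \<longleftrightarrow> (\<exists>a\<in>H. abs_irred H a \<and> dsupp (divisor a) = S)"
    unfolding A_def by (intro bex_cong refl) (simp add: supp_pideal)
  have B: "B \<longleftrightarrow> minimal_supp (H - unitsH H) S"
    unfolding B_def minimal_supp_iff[OF Diff_subset] ..
  have "{b. irred H b} \<subseteq> H" using irred_mem by blast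
  then have C: "C \<longleftrightarrow> minimal_supp {b. irred H b} S"
    using minimal_supp_iff[OF \<open>{b. irred H b} \<subseteq> H\<close>] unfolding C_def by simp
  have D: "D \<longleftrightarrow> nat_dependent S \<and> (\<forall>T. T \<subset> S \<longrightarrow> \<not> nat_dependent T)"
    unfolding D_def G_def by (rule minimal_nat_dependent_iff)
  have E: "E \<longleftrightarrow> nat_dependent S \<and> (\<forall>T. T \<subset> S \<longrightarrow> \<not> int_dependent T)"
    unfolding E_def G_def by (rule minimal_int_dependent_iff)
  have "A \<Longrightarrow> B" unfolding A B using minimal_supp_nonunit_if_abs_irred by blast
  moreover have "B \<Longrightarrow> C" unfolding B C by (rule minimal_supp_irred_if_nonunit)
  moreover have "C \<Longrightarrow> D" unfolding C D by (rule minimal_nat_dependent_if_minimal_supp_irred)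
  moreover have "D \<Longrightarrow> E" unfolding D E using int_independent_if_minimal_nat_dependent by blast
  moreover have "E \<Longrightarrow> A" unfolding E A using exists_abs_irred_if_int_independent assms(3) by blast
  moreover have "E \<Longrightarrow> associated H a b"
    if "a \<in> H" "abs_irred H a" "supp H (pideal H a) = S"
      "b \<in> H" "abs_irred H b" "supp H (pideal H b) = S" for a b
    unfolding E using associated_if_int_independent[OF assms(3)] that supp_pideal
    unfolding abs_irred_def by auto
  ultimately show ?thesis by blast
qed

end
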